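(* Let $\wp(z;\tau)$ be the Weierstrass $\wp$-function of the lattice $\Lambda(1,\tau)=\{m+n\tau:m,n\in\mathbb{Z}\}$ ($\mathrm{Im}\,\tau>0$), satisfying $(\wp')^2=4\wp^3-g_2\wp-g_3=4(\wp-e_1)(\wp-e_2)(\wp-e_3)$ with $e_1=\wp(\tfrac12)$, $e_2=\wp(\tfrac\tau2)$, $e_3=\wp(\tfrac{1+\tau}2)$. If $|e_i|=|e_j|$ for some distinct $i,j\in\{1,2,3\}$, then the $j$-invariant $j(\tau)=1728\,\dfrac{g_2^3}{g_2^3-27g_3^2}$ is real. *)

theory Defs
  imports "HOL-Analysis.Analysis"
begin

definition lattice :: "complex \<Rightarrow> complex set" where
  "lattice \<tau> = {of_int m + of_int n * \<tau> | m n. True}"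

text \<open>Weierstrass wp-function of Lambda(1,tau) (the series converges absolutely
  for Im tau > 0 and z outside the lattice, so the unordered sum is the usual one).\<close>
definition wp :: "complex \<Rightarrow> complex \<Rightarrow> complex" where
  "wp \<tau> z = 1 / z^2 + infsum (\<lambda>\<omega>. 1 / (z - \<omega>)^2 - 1 / \<omega>^2) (lattice \<tau> - {0})"

definition g2 :: "complex \<Rightarrow> complex" where
  "g2 \<tau> = 60 * infsum (\<lambda>\<omega>. 1 / \<omega>^4) (lattice \<tau> - {0})"

definition g3 :: "complex \<Rightarrow> complex" where
  "g3 \<tau> = 140 * infsum (\<lambda>\<omega>. 1 / \<omega>^6) (lattice \<tau> - {0})"

definition j_invariant :: "complex \<Rightarrow> complex" where
  "j_invariant \<tau> = 1728 * (g2 \<tau>)^3 / ((g2 \<tau>)^3 - 27 * (g3 \<tau>)^2)"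

definition e_val :: "complex \<Rightarrow> nat \<Rightarrow> complex" where
  "e_val \<tau> i = (if i = 1 then wp \<tau> (1/2)
               else if i = 2 then wp \<tau> (\<tau>/2)
               else wp \<tau> ((1 + \<tau>)/2))"

end

theory Submission
  imports Defs "HOL-Complex_Analysis.Complex_Analysis"
begin

text \<open>
  The half-periods \<open>u\<close> are zeros of \<open>\<wp>'\<close> (it is odd and periodic), so by the differential
  equation the \<open>e\<^sub>k\<close> are roots of \<open>4X\<^sup>3 - g\<^sub>2X - g\<^sub>3\<close>. They are pairwise distinct: if
  \<open>\<wp>(u) = \<wp>(v)\<close>, the equation \<open>\<wp>'' = 6\<wp>\<^sup>2 - g\<^sub>2/2\<close> together with \<open>\<wp>'(u) = \<wp>'(v) = 0\<close> makes
  all derivatives of \<open>\<wp>\<close> at \<open>u\<close> and \<open>v\<close> agree, hence \<open>\<wp>(\<cdot> + u) = \<wp>(\<cdot> + v)\<close>, and the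
  non-period \<open>v - u\<close> would move the double pole at \<open>0\<close>.
  For two distinct roots \<open>x, y\<close> one gets \<open>g\<^sub>2 = 4(x\<^sup>2 + xy + y\<^sup>2)\<close> and \<open>g\<^sub>3 = -4xy(x + y)\<close>.
  If \<open>|x| = |y|\<close>, write \<open>y = xw\<close> with \<open>|w| = 1\<close>; then \<open>1 + w + w\<^sup>2 = w(1 + 2 Re w)\<close> and
  \<open>(1 + w)\<^sup>2 = w(2 + 2 Re w)\<close>, so \<open>g\<^sub>2\<^sup>3\<close> and \<open>g\<^sub>3\<^sup>2\<close> are real multiples of the same number
  \<open>x\<^sup>6w\<^sup>3\<close>, which cancels in \<open>j\<close>.

  The analytic facts are derived from the lattice sum: \<open>\<wp>\<close> is holomorphic off the lattice,
  even and doubly periodic, and \<open>(\<wp>')\<^sup>2 - 4\<wp>\<^sup>3 + g\<^sub>2\<wp> + g\<^sub>3\<close> is an elliptic function which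
  by the Laurent expansion at \<open>0\<close> extends holomorphically to the lattice with value \<open>0\<close>,
  so it vanishes by Liouville's theorem.
\<close>

lemma summable_on_diff:
  fixes f g :: "'a \<Rightarrow> 'b::topological_ab_group_add"
  assumes "f summable_on A" "g summable_on A"
  shows "(\<lambda>x. f x - g x) summable_on A"
proof -
  have "(\<lambda>x. - g x) summable_on A" using assms(2) by (simp add: summable_on_uminus)
  then show ?thesis using summable_on_add[OF assms(1)] by fastforce
qed

lemma infsum_diff:
  fixes f g :: "'a \<Rightarrow> 'b::{topological_ab_group_add, t2_space}"
  assumes "f summable_on A" "g summable_on A"
  shows "infsum (\<lambda>x. f x - g x) A = infsum f A - infsum g A"
proof -
  have "(\<lambda>x. - g x) summable_on A" using assms(2) by (simp add: summable_on_uminus)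
  then have "infsum (\<lambda>x. f x + - g x) A = infsum f A + infsum (\<lambda>x. - g x) A"
    by (intro infsum_add assms)
  then show ?thesis by (simp add: infsum_uminus)
qed

lemma infsum_split_null:
  fixes F Q P1 P2 P3 :: "'a \<Rightarrow> 'b::{topological_ab_group_add, t2_space}"
  assumes eq: "\<And>x. x \<in> A \<Longrightarrow> F x = Q x + (P1 x + (P2 x + P3 x))"
    and "F summable_on A" "P1 summable_on A" "P2 summable_on A" "P3 summable_on A"
    and null: "infsum Q A = 0"
  shows "infsum F A = infsum P1 A + infsum P2 A + infsum P3 A"
proof -
  have s23: "(\<lambda>x. P2 x + P3 x) summable_on A" by (intro summable_on_add assms)
  have sP: "(\<lambda>x. P1 x + (P2 x + P3 x)) summable_on A" by (intro summable_on_add assms s23)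
  have "(\<lambda>x. F x - (P1 x + (P2 x + P3 x))) summable_on A" by (intro summable_on_diff assms sP)
  then have sQ: "Q summable_on A" by (rule summable_on_cong[THEN iffD1, rotated]) (simp add: eq)
  have "infsum F A = infsum (\<lambda>x. Q x + (P1 x + (P2 x + P3 x))) A"
    using eq by (intro infsum_cong) auto
  also have "\<dots> = infsum Q A + (infsum P1 A + (infsum P2 A + infsum P3 A))"
    by (simp add: infsum_add sQ sP s23 assms)
  finally show ?thesis using null by (simp add: add.assoc)
qed

lemma Bfun_add: "Bfun f F \<Longrightarrow> Bfun g F \<Longrightarrow> Bfun (\<lambda>x. f x + g x) F"
  for f g :: "'a \<Rightarrow> 'b::real_normed_vector"
proof -
  assume "Bfun f F" "Bfun g F"
  then obtain A B where "eventually (\<lambda>x. norm (f x) \<le> A) F" "eventually (\<lambda>x. norm (g x) \<le> B) F"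
    by (metis BfunE)
  then have "eventually (\<lambda>x. norm (f x + g x) \<le> A + B) F"
    by eventually_elim (metis add_mono norm_triangle_ineq order_trans)
  then show ?thesis by (rule BfunI)
qed

lemma Bfun_mult: "Bfun f F \<Longrightarrow> Bfun g F \<Longrightarrow> Bfun (\<lambda>x. f x * g x) F"
  for f g :: "'a \<Rightarrow> 'b::real_normed_algebra"
proof -
  assume "Bfun f F" "Bfun g F"
  then obtain A B where "eventually (\<lambda>x. norm (f x) \<le> A) F" "eventually (\<lambda>x. norm (g x) \<le> B) F"
    by (metis BfunE)
  then have "eventually (\<lambda>x. norm (f x * g x) \<le> A * B) F"
    by eventually_elim (metis mult_mono' norm_ge_zero norm_mult_ineq order_trans)
  then show ?thesis by (rule BfunI)
qed

lemma Bfun_diff: "Bfun f F \<Longrightarrow> Bfun g F \<Longrightarrow> Bfun (\<lambda>x. f x - g x) F"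
  for f g :: "'a \<Rightarrow> 'b::real_normed_vector"
  using Bfun_add[of f F "\<lambda>x. - g x"] by (simp add: Bfun_def)

lemma Bfun_power: "Bfun f F \<Longrightarrow> Bfun (\<lambda>x. f x ^ n) F"
  for f :: "'a \<Rightarrow> 'b::real_normed_algebra_1"
  by (induction n) (auto intro: Bfun_mult)

lemma Bfun_ident_at: "Bfun (\<lambda>x. x) (at a)"
  for a :: "'a::real_normed_vector"
proof (rule BfunI)
  show "eventually (\<lambda>x. norm x \<le> norm a + 1) (at a)"
    unfolding eventually_at
    by (intro exI[of _ 1]) (auto simp: dist_norm intro: order_trans[OF norm_triangle_sub[of _ a]])
qed

lemma tendsto_square_mult_Bfun_at_0:
  fixes \<Phi> :: "complex \<Rightarrow> complex"
  assumes "Bfun \<Phi> (at 0)"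
  shows "((\<lambda>z. z^2 * \<Phi> z) \<longlongrightarrow> 0) (at 0)"
proof -
  have "((\<lambda>z::complex. z^2) \<longlongrightarrow> 0^2) (at 0)" by (intro tendsto_intros)
  then have "Zfun (\<lambda>z::complex. z^2) (at 0)" by (simp add: tendsto_Zfun_iff)
  then have "Zfun (\<lambda>z. z^2 * \<Phi> z) (at 0)"
    by (rule bounded_bilinear.Zfun_prod_Bfun[OF bounded_bilinear_mult _ assms])
  then show ?thesis by (simp add: tendsto_Zfun_iff)
qed

lemma periodic_of_nat_mult:
  fixes F :: "'a::semiring_1 \<Rightarrow> 'b"
  assumes "\<And>z. F (z + p) = F z"
  shows "F (z + of_nat n * p) = F z"
proof (induction n arbitrary: z)
  case (Suc n)
  have "F (z + of_nat (Suc n) * p) = F ((z + of_nat n * p) + p)" by (simp add: algebra_simps)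
  then show ?case using assms Suc by simp
qed simp

lemma periodic_of_int_mult:
  fixes F :: "'a::ring_1 \<Rightarrow> 'b"
  assumes "\<And>z. F (z + p) = F z"
  shows "F (z + of_int k * p) = F z"
proof (cases "k \<ge> 0")
  case True
  then obtain n where "k = int n" by (metis nonneg_int_cases)
  then show ?thesis using periodic_of_nat_mult[of F p, OF assms, of z n] by simp
next
  case False
  then obtain n where k: "k = - int n" by (metis linorder_not_le nonpos_int_cases order_less_imp_le)
  have "F ((z - of_nat n * p) + of_nat n * p) = F (z - of_nat n * p)"
    by (rule periodic_of_nat_mult[of F p, OF assms])
  then show ?thesis using k by simp
qed

section \<open>Geometry of the lattice\<close>

locale period_lattice =
  fixes \<tau> :: complex
  assumes Im_tau_pos: "Im \<tau> > 0"
begin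

definition lattice_pt :: "int \<times> int \<Rightarrow> complex" where
  "lattice_pt = (\<lambda>(m, n). of_int m + of_int n * \<tau>)"

lemma lattice_pt_simp: "lattice_pt (m, n) = of_int m + of_int n * \<tau>"
  by (simp add: lattice_pt_def)

lemma lattice_eq_range: "lattice \<tau> = range lattice_pt"
  by (auto simp: lattice_def lattice_pt_def)

lemma lattice_pt_eq_iff: "lattice_pt (m, n) = lattice_pt (m', n') \<longleftrightarrow> m = m' \<and> n = n'"
proof
  assume h: "lattice_pt (m, n) = lattice_pt (m', n')"
  then have "Im (lattice_pt (m, n)) = Im (lattice_pt (m', n'))" by simp
  then have "n = n'" using Im_tau_pos by (simp add: lattice_pt_simp)
  with h show "m = m' \<and> n = n'" by (simp add: lattice_pt_simp)
qed simp

lemma inj_lattice_pt: "inj lattice_pt"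
  by (auto simp: inj_on_def lattice_pt_eq_iff)

lemma lattice_nonzero_eq: "lattice \<tau> - {0} = lattice_pt ` (UNIV - {(0, 0)})"
  using lattice_pt_eq_iff[of _ _ 0 0] by (auto simp: lattice_eq_range lattice_pt_simp)

lemma lattice_memI: "of_int m + of_int n * \<tau> \<in> lattice \<tau>"
  by (auto simp: lattice_def)

lemma lattice_memE:
  assumes "x \<in> lattice \<tau>"
  obtains m n where "x = of_int m + of_int n * \<tau>"
  using assms by (auto simp: lattice_def)

lemma zero_in_lattice [simp]: "0 \<in> lattice \<tau>" using lattice_memI[of 0 0] by simp
lemma one_in_lattice [simp]: "1 \<in> lattice \<tau>" using lattice_memI[of 1 0] by simp
lemma tau_in_lattice [simp]: "\<tau> \<in> lattice \<tau>" using lattice_memI[of 0 1] by simp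

lemma lattice_add: "a \<in> lattice \<tau> \<Longrightarrow> b \<in> lattice \<tau> \<Longrightarrow> a + b \<in> lattice \<tau>"
proof -
  assume "a \<in> lattice \<tau>" "b \<in> lattice \<tau>"
  then obtain m n m' n' where "a = of_int m + of_int n * \<tau>" "b = of_int m' + of_int n' * \<tau>"
    by (metis lattice_memE)
  then have "a + b = of_int (m + m') + of_int (n + n') * \<tau>" by (simp add: algebra_simps)
  then show ?thesis using lattice_memI by metis
qed

lemma lattice_uminus_iff: "- a \<in> lattice \<tau> \<longleftrightarrow> a \<in> lattice \<tau>"
proof -
  have "- a \<in> lattice \<tau>" if "a \<in> lattice \<tau>" for a
  proof -
    obtain m n where "a = of_int m + of_int n * \<tau>" using \<open>a \<in> lattice \<tau>\<close> by (metis lattice_memE)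
    then have "- a = of_int (- m) + of_int (- n) * \<tau>" by (simp add: algebra_simps)
    then show ?thesis using lattice_memI by metis
  qed
  from this[of a] this[of "- a"] show ?thesis by auto
qed

lemma lattice_diff: "a \<in> lattice \<tau> \<Longrightarrow> b \<in> lattice \<tau> \<Longrightarrow> a - b \<in> lattice \<tau>"
  using lattice_add[of a "- b"] lattice_uminus_iff[of b] by simp

lemma lattice_add_iff: "w \<in> lattice \<tau> \<Longrightarrow> z + w \<in> lattice \<tau> \<longleftrightarrow> z \<in> lattice \<tau>"
  using lattice_add lattice_diff by (metis add_diff_cancel_right')

lemma bij_uminus_lattice: "bij_betw uminus (lattice \<tau>) (lattice \<tau>)"
  by (rule bij_betwI[of _ _ _ uminus]) (auto simp: lattice_uminus_iff)

lemma bij_uminus_lattice_nonzero: "bij_betw uminus (lattice \<tau> - {0}) (lattice \<tau> - {0})"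
  by (rule bij_betwI[of _ _ _ uminus]) (auto simp: lattice_uminus_iff)

lemma bij_translate_lattice: "w \<in> lattice \<tau> \<Longrightarrow> bij_betw (\<lambda>x. x + w) (lattice \<tau>) (lattice \<tau>)"
  by (rule bij_betwI[of _ _ _ "\<lambda>x. x - w"]) (auto simp: lattice_add_iff lattice_diff)

lemma lattice_periodic:
  assumes "\<And>z. F (z + 1) = F z" "\<And>z. F (z + \<tau>) = F z" "w \<in> lattice \<tau>"
  shows "F (z + w) = F z"
proof -
  obtain m n where w: "w = of_int m + of_int n * \<tau>" using assms(3) by (metis lattice_memE)
  have "F ((z + of_int n * \<tau>) + of_int m * 1) = F (z + of_int n * \<tau>)"
    by (rule periodic_of_int_mult) (use assms(1) in simp)
  also have "\<dots> = F z" by (rule periodic_of_int_mult) (use assms(2) in simp)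
  finally show ?thesis by (simp add: w algebra_simps)
qed

lemma half_lattice_pt_notin:
  assumes "odd m \<or> odd n"
  shows "lattice_pt (m, n) / 2 \<notin> lattice \<tau>"
proof
  assume "lattice_pt (m, n) / 2 \<in> lattice \<tau>"
  then obtain a b where "lattice_pt (m, n) / 2 = of_int a + of_int b * \<tau>" by (metis lattice_memE)
  then have "lattice_pt (2 * a, 2 * b) = lattice_pt (m, n)" by (simp add: lattice_pt_simp algebra_simps)
  then show False using assms by (auto simp: lattice_pt_eq_iff)
qed

lemma lattice_translate_bounded:
  obtains w p where "w \<in> lattice \<tau>" "z = p + w" "cmod p \<le> 1 + Im \<tau>"
proof -
  define n where "n = \<lfloor>Im z / Im \<tau>\<rfloor>"
  define m where "m = \<lfloor>Re z - of_int n * Re \<tau>\<rfloor>"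
  define p where "p = z - of_int n * \<tau> - of_int m"
  have "of_int n \<le> Im z / Im \<tau>" "Im z / Im \<tau> < of_int n + 1" unfolding n_def by linarith+
  then have "0 \<le> Im p" "Im p < Im \<tau>" using Im_tau_pos by (simp_all add: p_def field_simps)
  moreover have "0 \<le> Re p" "Re p < 1" unfolding p_def m_def by simp_all linarith+
  ultimately have "cmod p \<le> 1 + Im \<tau>" using cmod_le[of p] by linarith
  moreover have "z = p + (of_int m + of_int n * \<tau>)" by (simp add: p_def)
  ultimately show ?thesis using that lattice_memI by blast
qed

definition gap :: real where
  "gap = Im \<tau> / (Im \<tau> + \<bar>Re \<tau>\<bar> + 1)"

lemma gap_pos: "gap > 0"
  using Im_tau_pos by (simp add: gap_def)

lemma norm_lattice_pt_ge: "cmod (lattice_pt (m, n)) \<ge> gap * (\<bar>of_int m\<bar> + \<bar>of_int n\<bar>)"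
proof -
  define a where "a = Im \<tau>"
  define b where "b = \<bar>Re \<tau>\<bar>"
  define w where "w = cmod (lattice_pt (m, n))"
  have a: "a > 0" using Im_tau_pos a_def by simp
  have b: "b \<ge> 0" by (simp add: b_def)
  have Im_le: "\<bar>of_int n\<bar> * a \<le> w"
    using abs_Im_le_cmod[of "lattice_pt (m, n)"] a by (simp add: a_def w_def abs_mult lattice_pt_simp)
  have "\<bar>of_int m + of_int n * Re \<tau>\<bar> \<le> w"
    using abs_Re_le_cmod[of "lattice_pt (m, n)"] by (simp add: w_def lattice_pt_simp)
  moreover have "\<bar>of_int n * Re \<tau>\<bar> = \<bar>of_int n\<bar> * b" by (simp add: b_def abs_mult)
  ultimately have Re_le: "\<bar>of_int m\<bar> \<le> w + \<bar>of_int n\<bar> * b" by arith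
  have "a * \<bar>of_int m\<bar> \<le> a * (w + \<bar>of_int n\<bar> * b)"
    using Re_le a by (intro mult_left_mono) auto
  moreover have "a * (\<bar>of_int n\<bar> * b) \<le> w * b"
    using mult_right_mono[OF Im_le b] by (simp add: algebra_simps)
  ultimately have "a * (\<bar>of_int m\<bar> + \<bar>of_int n\<bar>) \<le> w * (a + b + 1)"
    using Im_le by (simp add: algebra_simps)
  then have "(\<bar>of_int m\<bar> + \<bar>of_int n\<bar>) * (a / (a + b + 1)) \<le> w"
    using a b by (simp add: field_simps)
  then show ?thesis by (simp add: gap_def a_def b_def w_def mult.commute)
qed

lemma norm_lattice_ge_gap: "\<omega> \<in> lattice \<tau> - {0} \<Longrightarrow> cmod \<omega> \<ge> gap"
proof -
  assume "\<omega> \<in> lattice \<tau> - {0}"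
  then obtain m n where \<omega>: "\<omega> = lattice_pt (m, n)" "(m, n) \<noteq> (0, 0)"
    by (auto simp: lattice_nonzero_eq)
  then have "gap * 1 \<le> gap * (\<bar>of_int m\<bar> + \<bar>of_int n\<bar>)"
    using gap_pos by (intro mult_left_mono) auto
  then show ?thesis using norm_lattice_pt_ge[of m n] \<omega> by simp
qed

lemma norm_lattice_pos: "\<omega> \<in> lattice \<tau> - {0} \<Longrightarrow> cmod \<omega> > 0"
  using norm_lattice_ge_gap gap_pos by fastforce

lemma notin_lattice_if_small: "z \<noteq> 0 \<Longrightarrow> cmod z < gap \<Longrightarrow> z \<notin> lattice \<tau>"
  using norm_lattice_ge_gap by force

lemma eventually_small_at_0: "eventually (\<lambda>z. z \<noteq> 0 \<and> cmod z \<le> gap / 2) (at (0::complex))"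
  unfolding eventually_at using gap_pos by (intro exI[of _ "gap / 2"]) auto

lemma dist_lattice_ge_gap:
  "a \<in> lattice \<tau> \<Longrightarrow> b \<in> lattice \<tau> \<Longrightarrow> a \<noteq> b \<Longrightarrow> dist a b \<ge> gap"
  using norm_lattice_ge_gap[of "a - b"] lattice_diff by (simp add: dist_norm)

lemma closed_lattice_nonzero: "closed (lattice \<tau> - {0})"
  by (rule discrete_imp_closed[OF gap_pos]) (metis Diff_iff dist_lattice_ge_gap dist_commute not_less)

lemma open_lattice_compl: "open (- lattice \<tau>)"
proof (rule open_Compl)
  show "closed (lattice \<tau>)"
    by (rule discrete_imp_closed[OF gap_pos]) (metis dist_lattice_ge_gap dist_commute not_less)
qed

lemma countable_lattice: "countable (lattice \<tau>)"
  unfolding lattice_eq_range by simp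

lemma connected_lattice_compl: "connected (- lattice \<tau>)"
  using connected_open_diff_countable[of UNIV "lattice \<tau>"] countable_lattice
  by (simp add: Compl_eq_Diff_UNIV connected_UNIV)

end

section \<open>Convergence of the lattice sums\<close>

definition inv_cube_l1 :: "int \<times> int \<Rightarrow> real" where
  "inv_cube_l1 = (\<lambda>(m, n). 1 / (\<bar>of_int m\<bar> + \<bar>of_int n\<bar>) ^ 3)"

definition int_box :: "nat \<Rightarrow> (int \<times> int) set" where
  "int_box N = {- int N..int N} \<times> {- int N..int N}"

lemma inv_cube_l1_nonneg: "inv_cube_l1 x \<ge> 0"
  by (cases x) (auto simp: inv_cube_l1_def)

lemma finite_int_box: "finite (int_box N)"
  by (simp add: int_box_def)

lemma card_int_box: "card (int_box N) = (2 * N + 1)^2"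
proof -
  have "card {- int N..int N} = 2 * N + 1" by simp
  then show ?thesis by (simp add: int_box_def card_cartesian_product power2_eq_square)
qed

lemma int_box_mono: "int_box N \<subseteq> int_box (Suc N)"
  by (auto simp: int_box_def)

lemma card_int_box_shell: "card (int_box (Suc N) - int_box N) = 8 * (N + 1)"
proof -
  have "(2 * Suc N + 1)^2 = (2 * N + 1)^2 + 8 * (N + 1)" by (simp add: power2_eq_square algebra_simps)
  then show ?thesis
    by (simp add: card_Diff_subset finite_int_box int_box_mono card_int_box)
qed

lemma inv_cube_l1_shell_le:
  assumes "x \<in> int_box (Suc N) - int_box N"
  shows "inv_cube_l1 x \<le> 1 / (real (Suc N))^3"
proof -
  obtain m n where x: "x = (m, n)" by (cases x)
  from assms have "\<bar>m\<bar> = int (Suc N) \<or> \<bar>n\<bar> = int (Suc N)" by (auto simp: int_box_def x)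
  then have "real (Suc N) \<le> \<bar>of_int m\<bar> + \<bar>of_int n\<bar>" by auto
  then have "(real (Suc N))^3 \<le> (\<bar>of_int m\<bar> + \<bar>of_int n\<bar>)^3" by (intro power_mono) auto
  then show ?thesis by (simp add: inv_cube_l1_def x divide_left_mono)
qed

lemma sum_inv_cube_l1_box_le:
  "sum inv_cube_l1 (int_box N - {(0, 0)}) \<le> 16 - 16 / real (N + 1)"
proof (induction N)
  case 0
  have "int_box 0 - {(0, 0)} = {}" by (auto simp: int_box_def)
  then show ?case by (simp only:) simp
next
  case (Suc N)
  define x where "x = real N + 1"
  have x: "x \<ge> 1" by (simp add: x_def)
  have "sum inv_cube_l1 (int_box (Suc N) - int_box N)
      \<le> real (card (int_box (Suc N) - int_box N)) * (1 / (real (Suc N))^3)"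
    using inv_cube_l1_shell_le by (intro sum_bounded_above) auto
  also have "\<dots> = 8 * x * (1 / x^3)"
    by (simp add: card_int_box_shell x_def algebra_simps)
  also have "\<dots> = 8 / x^2"
    using x by (simp add: field_simps power3_eq_cube power2_eq_square)
  finally have shell: "sum inv_cube_l1 (int_box (Suc N) - int_box N) \<le> 8 / x^2" .
  have "int_box (Suc N) - {(0, 0)} = (int_box N - {(0, 0)}) \<union> (int_box (Suc N) - int_box N)"
    using int_box_mono[of N] by (auto simp: int_box_def)
  then have "sum inv_cube_l1 (int_box (Suc N) - {(0, 0)})
      = sum inv_cube_l1 (int_box N - {(0, 0)}) + sum inv_cube_l1 (int_box (Suc N) - int_box N)"
    by (simp add: sum.union_disjoint finite_int_box Diff_Int_distrib2)
  also have "\<dots> \<le> 16 - 16 / x + 8 / x^2"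
    using Suc.IH shell by (simp add: x_def add.commute)
  also have "\<dots> \<le> 16 - 16 / (x + 1)"
  proof -
    have x0: "x \<noteq> 0" "x + 1 \<noteq> 0" using x by auto
    have "16 / x - 16 / (x + 1) - 8 / x^2 = (16 * x * (x + 1) - 16 * x^2 - 8 * (x + 1)) / (x^2 * (x + 1))"
      using x0 by (simp add: divide_simps power2_eq_square) (simp add: algebra_simps)
    also have "16 * x * (x + 1) - 16 * x^2 - 8 * (x + 1) = 8 * (x - 1)"
      by (simp add: algebra_simps power2_eq_square)
    finally have "16 / x - 16 / (x + 1) - 8 / x^2 = 8 * (x - 1) / (x^2 * (x + 1))" .
    moreover have "8 * (x - 1) / (x^2 * (x + 1)) \<ge> 0" using x by simp
    ultimately show ?thesis by linarith
  qed
  finally show ?case by (simp add: x_def add.commute)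
qed

lemma inv_cube_l1_summable: "inv_cube_l1 summable_on (UNIV - {(0, 0)})"
proof (rule nonneg_bdd_above_summable_on)
  show "bdd_above (sum inv_cube_l1 ` {F. F \<subseteq> UNIV - {(0, 0)} \<and> finite F})"
  proof (rule bdd_aboveI)
    fix s assume "s \<in> sum inv_cube_l1 ` {F. F \<subseteq> UNIV - {(0, 0)} \<and> finite F}"
    then obtain F where F: "finite F" "F \<subseteq> UNIV - {(0, 0)}" and s: "s = sum inv_cube_l1 F" by auto
    define N where "N = Max (insert 0 ((\<lambda>(m, n). nat (max \<bar>m\<bar> \<bar>n\<bar>)) ` F))"
    have "F \<subseteq> int_box N - {(0, 0)}"
    proof
      fix x assume "x \<in> F"
      obtain m n where x: "x = (m, n)" by (cases x)
      have "nat (max \<bar>m\<bar> \<bar>n\<bar>) \<le> N" unfolding N_def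
        using \<open>x \<in> F\<close> F(1) x by (intro Max_ge) auto
      then show "x \<in> int_box N - {(0, 0)}" using F(2) \<open>x \<in> F\<close> x by (auto simp: int_box_def)
    qed
    then have "sum inv_cube_l1 F \<le> sum inv_cube_l1 (int_box N - {(0, 0)})"
      by (intro sum_mono2) (auto simp: finite_int_box inv_cube_l1_nonneg)
    also have "\<dots> \<le> 16" using sum_inv_cube_l1_box_le[of N] by (smt (verit) divide_nonneg_nonneg of_nat_0_le_iff)
    finally show "s \<le> 16" using s by simp
  qed
qed (simp add: inv_cube_l1_nonneg)

context period_lattice
begin

lemma inv_norm_cube_summable: "(\<lambda>\<omega>. 1 / cmod \<omega> ^ 3) summable_on (lattice \<tau> - {0})"
proof -
  have "((\<lambda>\<omega>. 1 / cmod \<omega> ^ 3) \<circ> lattice_pt) summable_on (UNIV - {(0, 0)})"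
  proof (rule summable_on_comparison_test)
    show "(\<lambda>x. (1 / gap^3) * inv_cube_l1 x) summable_on (UNIV - {(0, 0)})"
      by (intro summable_on_cmult_right inv_cube_l1_summable)
    fix x :: "int \<times> int" assume x: "x \<in> UNIV - {(0, 0)}"
    obtain m n where xe: "x = (m, n)" by (cases x)
    have pos: "gap * (\<bar>of_int m\<bar> + \<bar>of_int n\<bar>) > 0" using x xe gap_pos by auto
    then have "(gap * (\<bar>of_int m\<bar> + \<bar>of_int n\<bar>))^3 \<le> cmod (lattice_pt (m, n)) ^ 3"
      using norm_lattice_pt_ge by (intro power_mono) auto
    moreover have "cmod (lattice_pt (m, n)) > 0" using norm_lattice_pt_ge[of m n] pos by linarith
    ultimately have "1 / cmod (lattice_pt (m, n)) ^ 3 \<le> 1 / (gap * (\<bar>of_int m\<bar> + \<bar>of_int n\<bar>))^3"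
      using pos by (intro divide_left_mono) auto
    then show "((\<lambda>\<omega>. 1 / cmod \<omega> ^ 3) \<circ> lattice_pt) x \<le> (1 / gap^3) * inv_cube_l1 x"
      by (simp add: xe inv_cube_l1_def power_mult_distrib)
  qed simp
  then show ?thesis unfolding lattice_nonzero_eq
    by (subst summable_on_reindex) (auto intro: inj_on_subset[OF inj_lattice_pt])
qed

definition inv_cube_sum :: real where
  "inv_cube_sum = infsum (\<lambda>\<omega>. 1 / cmod \<omega> ^ 3) (lattice \<tau> - {0})"

lemma lattice_sum_dominated:
  fixes F :: "complex \<Rightarrow> complex"
  assumes "\<And>\<omega>. \<omega> \<in> lattice \<tau> - {0} \<Longrightarrow> norm (F \<omega>) \<le> K / cmod \<omega> ^ 3"
  shows "F summable_on (lattice \<tau> - {0})" "norm (infsum F (lattice \<tau> - {0})) \<le> K * inv_cube_sum"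
proof -
  have s: "(\<lambda>\<omega>. K * (1 / cmod \<omega> ^ 3)) summable_on (lattice \<tau> - {0})"
    by (intro summable_on_cmult_right inv_norm_cube_summable)
  have ns: "(\<lambda>\<omega>. norm (F \<omega>)) summable_on (lattice \<tau> - {0})"
    by (rule summable_on_comparison_test[OF s]) (use assms in auto)
  then show "F summable_on (lattice \<tau> - {0})"
    by (simp add: summable_on_iff_abs_summable_on_complex)
  have "norm (infsum F (lattice \<tau> - {0})) \<le> infsum (\<lambda>\<omega>. norm (F \<omega>)) (lattice \<tau> - {0})"
    by (rule norm_infsum_bound) (use ns in simp)
  also have "\<dots> \<le> infsum (\<lambda>\<omega>. K * (1 / cmod \<omega> ^ 3)) (lattice \<tau> - {0})"
    by (rule infsum_mono[OF ns s]) (use assms in auto)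
  also have "\<dots> = K * inv_cube_sum" unfolding inv_cube_sum_def
    by (rule infsum_cmult_right) (use inv_norm_cube_summable in auto)
  finally show "norm (infsum F (lattice \<tau> - {0})) \<le> K * inv_cube_sum" .
qed

lemma inv_norm_power_le:
  assumes "\<omega> \<in> lattice \<tau> - {0}" "k \<ge> 3"
  shows "1 / cmod \<omega> ^ k \<le> (1 / gap) ^ (k - 3) / cmod \<omega> ^ 3"
proof -
  have \<omega>: "cmod \<omega> \<ge> gap" "cmod \<omega> > 0" using norm_lattice_ge_gap norm_lattice_pos assms by auto
  have "gap ^ (k - 3) \<le> cmod \<omega> ^ (k - 3)" using \<omega> gap_pos by (intro power_mono) auto
  moreover have "cmod \<omega> ^ k = cmod \<omega> ^ (k - 3) * cmod \<omega> ^ 3"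
    using assms(2) by (simp flip: power_add)
  ultimately show ?thesis using \<omega> gap_pos by (simp add: field_simps power_divide)
qed

lemma inv_power_summable:
  assumes "k \<ge> 3"
  shows "(\<lambda>\<omega>. 1 / \<omega>^k) summable_on (lattice \<tau> - {0})"
proof (rule lattice_sum_dominated(1))
  fix \<omega> assume "\<omega> \<in> lattice \<tau> - {0}"
  then show "norm (1 / \<omega>^k) \<le> (1 / gap) ^ (k - 3) / cmod \<omega> ^ 3"
    using inv_norm_power_le assms by (simp add: norm_divide norm_power)
qed

lemma infsum_lattice_odd:
  fixes F :: "complex \<Rightarrow> complex"
  assumes "\<And>\<omega>. F (- \<omega>) = - F \<omega>"
  shows "infsum F (lattice \<tau> - {0}) = 0"
proof -
  have "infsum F (lattice \<tau> - {0}) = infsum (\<lambda>\<omega>. F (- \<omega>)) (lattice \<tau> - {0})"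
    using infsum_reindex_bij_betw[OF bij_uminus_lattice_nonzero, of F] by simp
  also have "\<dots> = - infsum F (lattice \<tau> - {0})"
    by (simp add: assms infsum_uminus)
  finally show ?thesis by simp
qed

end

section \<open>Holomorphy, parity and periodicity of \<open>\<wp>\<close>\<close>

lemma inv_square_taylor_rem_eq:
  fixes A \<delta> :: complex
  assumes "A \<noteq> 0" "A - \<delta> \<noteq> 0"
  shows "1 / (A - \<delta>)^2 - 1 / A^2 - 2 * \<delta> / A^3 = \<delta>^2 * (3 * A - 2 * \<delta>) / (A^3 * (A - \<delta>)^2)"
  using assms by (simp add: field_simps) algebra

lemma norm_inv_square_taylor_le:
  fixes A \<delta> :: complex
  assumes "A \<noteq> 0" "cmod \<delta> \<le> cmod A / 2"
  shows "norm (1 / (A - \<delta>)^2 - 1 / A^2 - 2 * \<delta> / A^3) \<le> 16 * cmod \<delta> ^ 2 / cmod A ^ 4"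
proof -
  have a: "cmod A > 0" using assms by simp
  have n1: "cmod (3 * A - 2 * \<delta>) \<le> 4 * cmod A"
    using norm_triangle_ineq4[of "3 * A" "2 * \<delta>"] assms by (simp add: norm_mult)
  have n2: "cmod (A - \<delta>) \<ge> cmod A / 2"
    using norm_triangle_ineq2[of A \<delta>] assms by linarith
  then have "A - \<delta> \<noteq> 0" using a by auto
  then have "norm (1 / (A - \<delta>)^2 - 1 / A^2 - 2 * \<delta> / A^3)
      = cmod \<delta> ^ 2 * cmod (3 * A - 2 * \<delta>) / (cmod A ^ 3 * cmod (A - \<delta>) ^ 2)"
    using inv_square_taylor_rem_eq[OF assms(1)] by (simp add: norm_mult norm_divide norm_power)
  also have "\<dots> \<le> cmod \<delta> ^ 2 * (4 * cmod A) / (cmod A ^ 3 * (cmod A / 2) ^ 2)"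
    using a n2 by (intro frac_le mult_left_mono n1 mult_pos_pos mult_mono power_mono) auto
  also have "\<dots> = 16 * cmod \<delta> ^ 2 / cmod A ^ 4"
    using a by (simp add: field_simps power2_eq_square power3_eq_cube power4_eq_xxxx)
  finally show ?thesis .
qed

definition wp_term :: "complex \<Rightarrow> complex \<Rightarrow> complex" where
  "wp_term z \<omega> = 1 / (z - \<omega>)^2 - 1 / \<omega>^2"

context period_lattice
begin

definition ldist :: "complex \<Rightarrow> real" where
  "ldist z = infdist z (lattice \<tau> - {0})"

definition lratio :: "complex \<Rightarrow> real" where
  "lratio z = 1 + cmod z / ldist z"

lemma ldist_pos:
  assumes "z \<notin> lattice \<tau> - {0}"
  shows "ldist z > 0"
proof -
  have "1 \<in> lattice \<tau> - {0}" by simp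
  then have "lattice \<tau> - {0} \<noteq> {}" by blast
  then show ?thesis
    unfolding ldist_def by (intro infdist_pos_not_in_closed closed_lattice_nonzero assms)
qed

lemma lratio_ge_1: "z \<notin> lattice \<tau> - {0} \<Longrightarrow> lratio z \<ge> 1"
  using ldist_pos[of z] by (simp add: lratio_def)

lemma ldist_le_norm_diff:
  "\<omega> \<in> lattice \<tau> - {0} \<Longrightarrow> ldist z \<le> cmod (\<omega> - z)"
  using infdist_le[of \<omega> "lattice \<tau> - {0}" z] by (simp add: ldist_def dist_norm norm_minus_commute)

lemma norm_le_lratio_mult:
  assumes z: "z \<notin> lattice \<tau> - {0}" and \<omega>: "\<omega> \<in> lattice \<tau> - {0}"
  shows "cmod \<omega> \<le> lratio z * cmod (\<omega> - z)"
proof -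
  have d: "ldist z > 0" using ldist_pos[OF z] .
  have "cmod \<omega> \<le> cmod (\<omega> - z) + cmod z" by (metis diff_add_cancel norm_triangle_ineq)
  also have "cmod z = cmod z / ldist z * ldist z" using d by simp
  also have "\<dots> \<le> cmod z / ldist z * cmod (\<omega> - z)"
    using ldist_le_norm_diff[OF \<omega>] d by (intro mult_left_mono) auto
  finally show ?thesis by (simp add: lratio_def algebra_simps)
qed

lemma inv_norm_diff_power_le:
  assumes z: "z \<notin> lattice \<tau> - {0}" and \<omega>: "\<omega> \<in> lattice \<tau> - {0}"
  shows "1 / cmod (\<omega> - z) ^ k \<le> lratio z ^ k / cmod \<omega> ^ k"
proof -
  have "cmod (\<omega> - z) > 0" using ldist_le_norm_diff[OF \<omega>, of z] ldist_pos[OF z] by linarith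
  moreover have "cmod \<omega> ^ k \<le> (lratio z * cmod (\<omega> - z)) ^ k"
    using norm_le_lratio_mult[OF z \<omega>] by (intro power_mono) auto
  ultimately show ?thesis using norm_lattice_pos[OF \<omega>] by (simp add: field_simps power_mult_distrib)
qed

definition wp_reg :: "complex \<Rightarrow> complex" where
  "wp_reg z = infsum (wp_term z) (lattice \<tau> - {0})"

definition wp_reg' :: "complex \<Rightarrow> complex" where
  "wp_reg' z = infsum (\<lambda>\<omega>. -2 / (z - \<omega>)^3) (lattice \<tau> - {0})"

definition wp' :: "complex \<Rightarrow> complex" where
  "wp' z = -2 / z^3 + wp_reg' z"

lemma wp_eq_wp_reg: "wp \<tau> z = 1 / z^2 + wp_reg z"
  unfolding wp_def wp_reg_def wp_term_def[abs_def] by simp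

lemma norm_wp_term_le:
  assumes z: "z \<notin> lattice \<tau> - {0}" and \<omega>: "\<omega> \<in> lattice \<tau> - {0}"
  shows "norm (wp_term z \<omega>) \<le> (cmod z * (2 + cmod z / gap) * lratio z ^ 2) / cmod \<omega> ^ 3"
proof -
  have "cmod (\<omega> - z) > 0" using ldist_le_norm_diff[OF \<omega>, of z] ldist_pos[OF z] by linarith
  moreover have p: "cmod \<omega> > 0" and gap: "gap \<le> cmod \<omega>"
    using norm_lattice_pos norm_lattice_ge_gap \<omega> by auto
  ultimately have "\<omega> \<noteq> 0" "z - \<omega> \<noteq> 0" "\<omega> - z \<noteq> 0" by auto
  then have "wp_term z \<omega> = z * (2 * \<omega> - z) * (1 / \<omega>^2) * (1 / (\<omega> - z)^2)"
    unfolding wp_term_def by (simp add: field_simps) algebra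
  then have eq: "norm (wp_term z \<omega>)
      = cmod z * cmod (2 * \<omega> - z) * (1 / cmod \<omega> ^ 2) * (1 / cmod (\<omega> - z) ^ 2)"
    by (simp add: norm_mult norm_divide norm_power)
  have "cmod z \<le> cmod z / gap * cmod \<omega>"
    using mult_left_mono[OF gap, of "cmod z / gap"] gap_pos by simp
  then have n1: "cmod (2 * \<omega> - z) \<le> (2 + cmod z / gap) * cmod \<omega>"
    using norm_triangle_ineq4[of "2 * \<omega>" z] by (simp add: norm_mult algebra_simps)
  have "norm (wp_term z \<omega>) \<le> cmod z * ((2 + cmod z / gap) * cmod \<omega>) * (1 / cmod \<omega> ^ 2)
      * (lratio z ^ 2 / cmod \<omega> ^ 2)"
    unfolding eq using gap_pos
    by (intro mult_mono n1 inv_norm_diff_power_le[OF z \<omega>] mult_nonneg_nonneg) auto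
  also have "\<dots> = (cmod z * (2 + cmod z / gap) * lratio z ^ 2) / cmod \<omega> ^ 3"
    using p by (simp add: field_simps power2_eq_square power3_eq_cube)
  finally show ?thesis .
qed

lemma wp_term_summable: "z \<notin> lattice \<tau> - {0} \<Longrightarrow> wp_term z summable_on (lattice \<tau> - {0})"
  using lattice_sum_dominated(1)[OF norm_wp_term_le] by blast

lemma wp_reg'_term_summable:
  assumes z: "z \<notin> lattice \<tau> - {0}"
  shows "(\<lambda>\<omega>. -2 / (z - \<omega>)^3) summable_on (lattice \<tau> - {0})"
proof (rule lattice_sum_dominated(1))
  fix \<omega> assume \<omega>: "\<omega> \<in> lattice \<tau> - {0}"
  have "norm (-2 / (z - \<omega>)^3) = 2 * (1 / cmod (\<omega> - z) ^ 3)"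
    by (simp add: norm_divide norm_power norm_minus_commute)
  also have "\<dots> \<le> 2 * (lratio z ^ 3 / cmod \<omega> ^ 3)"
    by (intro mult_left_mono inv_norm_diff_power_le[OF z \<omega>]) auto
  finally show "norm (-2 / (z - \<omega>)^3) \<le> (2 * lratio z ^ 3) / cmod \<omega> ^ 3" by simp
qed

lemma wp_term_taylor_le:
  assumes z: "z \<notin> lattice \<tau> - {0}" and \<omega>: "\<omega> \<in> lattice \<tau> - {0}"
    and y: "cmod (y - z) \<le> ldist z / 2"
  shows "norm (wp_term y \<omega> - wp_term z \<omega> - (y - z) * (-2 / (z - \<omega>)^3))
    \<le> (16 * lratio z ^ 4 / gap * cmod (y - z) ^ 2) / cmod \<omega> ^ 3"
proof -
  define A where "A = \<omega> - z"
  define \<delta> where "\<delta> = y - z"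
  have "A \<noteq> 0" using z \<omega> by (auto simp: A_def)
  moreover have "cmod \<delta> \<le> cmod A / 2" using y ldist_le_norm_diff[OF \<omega>, of z] by (simp add: A_def \<delta>_def)
  moreover have "wp_term y \<omega> - wp_term z \<omega> - \<delta> * (-2 / (z - \<omega>)^3)
      = 1 / (A - \<delta>)^2 - 1 / A^2 - 2 * \<delta> / A^3"
  proof -
    have "(y - \<omega>)^2 = (A - \<delta>)^2" "(z - \<omega>)^2 = A^2" "(z - \<omega>)^3 = - (A^3)"
      by (simp_all add: A_def \<delta>_def power2_eq_square power3_eq_cube algebra_simps)
    then show ?thesis by (simp add: wp_term_def)
  qed
  ultimately have "norm (wp_term y \<omega> - wp_term z \<omega> - \<delta> * (-2 / (z - \<omega>)^3))
      \<le> 16 * cmod \<delta> ^ 2 * (1 / cmod A ^ 4)"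
    using norm_inv_square_taylor_le[of A \<delta>] by simp
  also have "\<dots> \<le> 16 * cmod \<delta> ^ 2 * (lratio z ^ 4 * (1 / cmod \<omega> ^ 4))"
    using inv_norm_diff_power_le[OF z \<omega>, of 4] unfolding A_def by (intro mult_left_mono) auto
  also have "\<dots> \<le> 16 * cmod \<delta> ^ 2 * (lratio z ^ 4 * ((1 / gap) ^ (4 - 3) / cmod \<omega> ^ 3))"
    using inv_norm_power_le[OF \<omega>, of 4] lratio_ge_1[OF z] by (intro mult_left_mono) auto
  finally show ?thesis by (simp add: \<delta>_def mult_ac)
qed

lemma wp_reg_taylor_le:
  assumes z: "z \<notin> lattice \<tau> - {0}" and y: "cmod (y - z) \<le> ldist z / 2"
  shows "norm (wp_reg y - wp_reg z - (y - z) * wp_reg' z)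
    \<le> 16 * lratio z ^ 4 / gap * inv_cube_sum * cmod (y - z) ^ 2"
proof -
  have "y \<notin> lattice \<tau> - {0}"
    using ldist_le_norm_diff[of y z] ldist_pos[OF z] y by (force simp: norm_minus_commute)
  have s: "wp_term y summable_on (lattice \<tau> - {0})" "wp_term z summable_on (lattice \<tau> - {0})"
    "(\<lambda>\<omega>. (y - z) * (-2 / (z - \<omega>)^3)) summable_on (lattice \<tau> - {0})"
    by (intro wp_term_summable z \<open>y \<notin> lattice \<tau> - {0}\<close> summable_on_cmult_right
        wp_reg'_term_summable)+
  have "infsum (\<lambda>\<omega>. wp_term y \<omega> - wp_term z \<omega> - (y - z) * (-2 / (z - \<omega>)^3)) (lattice \<tau> - {0})
      = infsum (\<lambda>\<omega>. wp_term y \<omega> - wp_term z \<omega>) (lattice \<tau> - {0})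
        - infsum (\<lambda>\<omega>. (y - z) * (-2 / (z - \<omega>)^3)) (lattice \<tau> - {0})"
    by (intro infsum_diff summable_on_diff s)
  also have "\<dots> = wp_reg y - wp_reg z - (y - z) * wp_reg' z"
    unfolding wp_reg_def wp_reg'_def
    by (subst infsum_diff[OF s(1,2)], subst infsum_cmult_right) (use wp_reg'_term_summable[OF z] in auto)
  finally show ?thesis
    using lattice_sum_dominated(2)[OF wp_term_taylor_le[OF z _ y]] by (simp add: mult_ac)
qed

lemma wp_reg_has_field_derivative:
  assumes z: "z \<notin> lattice \<tau> - {0}"
  shows "(wp_reg has_field_derivative wp_reg' z) (at z)"
proof -
  define K where "K = 16 * lratio z ^ 4 / gap * inv_cube_sum"
  have "eventually (\<lambda>y. y \<noteq> z \<and> dist y z < ldist z / 2) (at z)"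
    unfolding eventually_at using ldist_pos[OF z] by (intro exI[of _ "ldist z / 2"]) auto
  then have "eventually (\<lambda>y. norm ((wp_reg y - wp_reg z) / (y - z) - wp_reg' z) \<le> K * cmod (y - z)) (at z)"
  proof eventually_elim
    case (elim y)
    then have yz: "y - z \<noteq> 0" and "cmod (y - z) \<le> ldist z / 2" by (simp_all add: dist_norm)
    from this(2) have bound: "norm (wp_reg y - wp_reg z - (y - z) * wp_reg' z) \<le> K * cmod (y - z) ^ 2"
      unfolding K_def by (rule wp_reg_taylor_le[OF z])
    have "(wp_reg y - wp_reg z) / (y - z) - wp_reg' z
        = (wp_reg y - wp_reg z - (y - z) * wp_reg' z) / (y - z)"
      using yz by (simp add: diff_divide_distrib)
    then have "norm ((wp_reg y - wp_reg z) / (y - z) - wp_reg' z)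
        = norm (wp_reg y - wp_reg z - (y - z) * wp_reg' z) / cmod (y - z)"
      by (simp only: norm_divide)
    also have "\<dots> \<le> K * cmod (y - z) ^ 2 / cmod (y - z)"
      by (rule divide_right_mono[OF bound norm_ge_zero])
    also have "\<dots> = K * cmod (y - z)" using yz by (simp add: power2_eq_square)
    finally show ?case .
  qed
  moreover have "((\<lambda>y. K * cmod (y - z)) \<longlongrightarrow> 0) (at z)"
  proof -
    have "((\<lambda>y. K * cmod (y - z)) \<longlongrightarrow> K * cmod (z - z)) (at z)" by (intro tendsto_intros)
    then show ?thesis by simp
  qed
  ultimately have "((\<lambda>y. (wp_reg y - wp_reg z) / (y - z) - wp_reg' z) \<longlongrightarrow> 0) (at z)"
    by (rule Lim_null_comparison)
  then show ?thesis
    by (simp add: has_field_derivative_iff tendsto_minus_cancel_left Lim_null[symmetric])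
qed

lemma wp_has_field_derivative:
  assumes "z \<notin> lattice \<tau>"
  shows "(wp \<tau> has_field_derivative wp' z) (at z)"
proof -
  have "z \<noteq> 0" using assms by auto
  then have "((\<lambda>z. 1 / z^2) has_field_derivative (-2 / z^3)) (at z)"
    by (auto intro!: derivative_eq_intros simp: field_simps power2_eq_square power3_eq_cube)
  then have "((\<lambda>z. 1 / z^2 + wp_reg z) has_field_derivative (-2 / z^3 + wp_reg' z)) (at z)"
    using assms by (intro DERIV_add wp_reg_has_field_derivative) auto
  then show ?thesis by (simp add: wp'_def wp_eq_wp_reg[abs_def])
qed

lemma wp_holomorphic: "wp \<tau> holomorphic_on (- lattice \<tau>)"
  using wp_has_field_derivative
  by (auto simp: holomorphic_on_def field_differentiable_def at_within_open[OF _ open_lattice_compl]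
      intro: has_field_derivative_at_within)

lemma wp'_eq_deriv: "z \<notin> lattice \<tau> \<Longrightarrow> wp' z = deriv (wp \<tau>) z"
  using wp_has_field_derivative DERIV_imp_deriv by metis

lemma wp'_holomorphic: "wp' holomorphic_on (- lattice \<tau>)"
proof -
  have "deriv (wp \<tau>) holomorphic_on (- lattice \<tau>)"
    by (intro holomorphic_deriv wp_holomorphic open_lattice_compl)
  then show ?thesis by (rule holomorphic_transform) (simp add: wp'_eq_deriv)
qed

lemma wp'_eq_infsum:
  assumes "z \<notin> lattice \<tau>"
  shows "wp' z = infsum (\<lambda>\<omega>. -2 / (z - \<omega>)^3) (lattice \<tau>)"
proof -
  have "infsum (\<lambda>\<omega>. -2 / (z - \<omega>)^3) (lattice \<tau>)
      = infsum (\<lambda>\<omega>. -2 / (z - \<omega>)^3) (insert 0 (lattice \<tau> - {0}))"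
    by (simp add: insert_absorb)
  also have "\<dots> = -2 / (z - 0)^3 + wp_reg' z"
    unfolding wp_reg'_def using assms by (intro infsum_insert wp_reg'_term_summable) auto
  finally show ?thesis by (simp add: wp'_def)
qed

lemma wp'_periodic:
  assumes "z \<notin> lattice \<tau>" "w \<in> lattice \<tau>"
  shows "wp' (z + w) = wp' z"
proof -
  have "z + w \<notin> lattice \<tau>" using assms lattice_add_iff by auto
  then have "wp' (z + w) = infsum (\<lambda>\<omega>. -2 / (z + w - \<omega>)^3) (lattice \<tau>)" by (rule wp'_eq_infsum)
  also have "\<dots> = infsum (\<lambda>\<omega>. -2 / (z + w - (\<omega> + w))^3) (lattice \<tau>)"
    using infsum_reindex_bij_betw[OF bij_translate_lattice[OF assms(2)], of "\<lambda>\<omega>. -2 / (z + w - \<omega>)^3"]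
    by simp
  also have "\<dots> = wp' z" using wp'_eq_infsum[OF assms(1)] by simp
  finally show ?thesis .
qed

lemma wp'_odd:
  assumes "z \<notin> lattice \<tau>"
  shows "wp' (- z) = - wp' z"
proof -
  have "- z \<notin> lattice \<tau>" using assms lattice_uminus_iff by auto
  then have "wp' (- z) = infsum (\<lambda>\<omega>. -2 / (- z - \<omega>)^3) (lattice \<tau>)" by (rule wp'_eq_infsum)
  also have "\<dots> = infsum (\<lambda>\<omega>. -2 / (- z - (- \<omega>))^3) (lattice \<tau>)"
    using infsum_reindex_bij_betw[OF bij_uminus_lattice, of "\<lambda>\<omega>. -2 / (- z - \<omega>)^3"] by simp
  also have "\<dots> = infsum (\<lambda>\<omega>. - (-2 / (z - \<omega>)^3)) (lattice \<tau>)"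
  proof (rule infsum_cong)
    fix \<omega> :: complex
    have "(- z - (- \<omega>))^3 = - ((z - \<omega>)^3)" by (simp add: power3_eq_cube algebra_simps)
    then show "-2 / (- z - (- \<omega>))^3 = - (-2 / (z - \<omega>)^3)" by simp
  qed
  also have "\<dots> = - wp' z" by (simp add: infsum_uminus wp'_eq_infsum[OF assms])
  finally show ?thesis .
qed

lemma wp_even: "wp \<tau> (- z) = wp \<tau> z"
proof -
  have "wp_reg (- z) = infsum (\<lambda>\<omega>. wp_term (- z) (- \<omega>)) (lattice \<tau> - {0})"
    unfolding wp_reg_def using infsum_reindex_bij_betw[OF bij_uminus_lattice_nonzero, of "wp_term (- z)"]
    by simp
  also have "\<dots> = wp_reg z" unfolding wp_reg_def
  proof (rule infsum_cong)
    fix \<omega> :: complex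
    have "(- z - (- \<omega>))^2 = (z - \<omega>)^2" by (simp add: power2_eq_square algebra_simps)
    then show "wp_term (- z) (- \<omega>) = wp_term z \<omega>" by (simp add: wp_term_def)
  qed
  finally show ?thesis by (simp add: wp_eq_wp_reg)
qed

text \<open>
  Since \<open>\<wp>'\<close> is periodic, \<open>\<wp>(z + w) - \<wp>(z)\<close> is constant on the connected set \<open>- lattice\<close>;
  evenness of \<open>\<wp>\<close> shows that the constant vanishes at \<open>z = -w/2\<close>.\<close>

lemma wp_periodic_if_half_notin:
  assumes w: "w \<in> lattice \<tau>" and half: "- w / 2 \<notin> lattice \<tau>" and z: "z \<notin> lattice \<tau>"
  shows "wp \<tau> (z + w) = wp \<tau> z"
proof -
  define f where "f = (\<lambda>z. wp \<tau> (z + w) - wp \<tau> z)"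
  have der: "(f has_field_derivative 0) (at x)" if x: "x \<in> - lattice \<tau>" for x
  proof -
    have xw: "x + w \<notin> lattice \<tau>" using x w lattice_add_iff by auto
    have "((\<lambda>x. wp \<tau> (x + w)) has_field_derivative wp' (x + w)) (at x)"
      using wp_has_field_derivative[OF xw] DERIV_shift by blast
    then have "(f has_field_derivative wp' (x + w) - wp' x) (at x)"
      unfolding f_def using wp_has_field_derivative x by (intro DERIV_diff) auto
    then show ?thesis using wp'_periodic x w by simp
  qed
  have "continuous_on (- lattice \<tau>) f"
    using der by (intro continuous_at_imp_continuous_on) (blast intro: DERIV_isCont)
  then obtain c where c: "\<And>x. x \<in> - lattice \<tau> \<Longrightarrow> f x = c"
    using DERIV_zero_connected_constant[of "- lattice \<tau>" "{}" f]
      connected_lattice_compl open_lattice_compl der by auto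
  have "f (- w / 2) = 0" using wp_even[of "w / 2"] by (simp add: f_def)
  then have "c = 0" using c[of "- w / 2"] half by simp
  then show ?thesis using c[of z] z by (simp add: f_def)
qed

lemma wp_plus_1: "z \<notin> lattice \<tau> \<Longrightarrow> wp \<tau> (z + 1) = wp \<tau> z"
  using wp_periodic_if_half_notin half_lattice_pt_notin[of "-1" 0] by (simp add: lattice_pt_simp)

lemma wp_plus_tau: "z \<notin> lattice \<tau> \<Longrightarrow> wp \<tau> (z + \<tau>) = wp \<tau> z"
  using wp_periodic_if_half_notin half_lattice_pt_notin[of 0 "-1"] by (simp add: lattice_pt_simp)

end

section \<open>Laurent expansion at the origin\<close>

text \<open>Remainders of the Taylor expansions in \<open>z\<close> of the summands of \<open>\<wp> - 1/z\<^sup>2\<close> and \<open>\<wp>' + 2/z\<^sup>3\<close>.\<close>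

definition wp_rem :: "complex \<Rightarrow> complex \<Rightarrow> complex" where
  "wp_rem z \<omega> = (7 * \<omega> - 6 * z) / (\<omega>^7 * (\<omega> - z)^2)"

definition wp'_rem :: "complex \<Rightarrow> complex \<Rightarrow> complex" where
  "wp'_rem z \<omega> = 2 * (\<omega>^2 + 5 * \<omega> * (\<omega> - z) + 15 * (\<omega> - z)^2) / (\<omega>^7 * (\<omega> - z)^3)"

lemma wp_term_expansion:
  assumes "\<omega> \<noteq> 0" "\<omega> - z \<noteq> 0"
  shows "wp_term z \<omega> = (2 * z * (1 / \<omega>^3) + 4 * z^3 * (1 / \<omega>^5) + 6 * z^5 * (1 / \<omega>^7))
     + (3 * z^2 * (1 / \<omega>^4) + (5 * z^4 * (1 / \<omega>^6) + z^6 * wp_rem z \<omega>))"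
proof -
  have e: "(z - \<omega>)^2 = (\<omega> - z)^2" by algebra
  have d: "\<omega>^7 * (\<omega> - z)^2 \<noteq> 0" using assms by simp
  show ?thesis unfolding wp_term_def wp_rem_def e using assms d
    apply (simp add: divide_simps)
    apply algebra
    done
qed

lemma wp'_term_expansion:
  assumes "\<omega> \<noteq> 0" "\<omega> - z \<noteq> 0"
  shows "-2 / (z - \<omega>)^3 = (2 * (1 / \<omega>^3) + 12 * z^2 * (1 / \<omega>^5) + 30 * z^4 * (1 / \<omega>^7))
     + (6 * z * (1 / \<omega>^4) + (20 * z^3 * (1 / \<omega>^6) + z^5 * wp'_rem z \<omega>))"
proof -
  have "(z - \<omega>)^3 = - ((\<omega> - z)^3)" by algebra
  then have e: "-2 / (z - \<omega>)^3 = 2 / (\<omega> - z)^3" by simp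
  have d: "\<omega>^7 * (\<omega> - z)^3 \<noteq> 0" using assms by simp
  show ?thesis unfolding wp'_rem_def e using assms d
    apply (simp add: divide_simps)
    apply algebra
    done
qed

context period_lattice
begin

definition G4 :: complex where
  "G4 = infsum (\<lambda>\<omega>. 1 / \<omega>^4) (lattice \<tau> - {0})"

definition G6 :: complex where
  "G6 = infsum (\<lambda>\<omega>. 1 / \<omega>^6) (lattice \<tau> - {0})"

definition Wp_rem :: "complex \<Rightarrow> complex" where
  "Wp_rem z = infsum (wp_rem z) (lattice \<tau> - {0})"

definition Wp'_rem :: "complex \<Rightarrow> complex" where
  "Wp'_rem z = infsum (wp'_rem z) (lattice \<tau> - {0})"

lemma g2_eq: "g2 \<tau> = 60 * G4"
  by (simp add: g2_def G4_def)

lemma g3_eq: "g3 \<tau> = 140 * G6"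
  by (simp add: g3_def G6_def)

lemma norm_bounds_if_small:
  assumes z: "cmod z \<le> gap / 2" and \<omega>: "\<omega> \<in> lattice \<tau> - {0}"
  shows "cmod z \<le> cmod \<omega> / 2" "cmod (\<omega> - z) \<ge> cmod \<omega> / 2" "cmod (\<omega> - z) \<le> 3/2 * cmod \<omega>"
    "cmod \<omega> > 0"
proof -
  show small: "cmod z \<le> cmod \<omega> / 2" using z norm_lattice_ge_gap[OF \<omega>] by linarith
  show "cmod (\<omega> - z) \<ge> cmod \<omega> / 2" using norm_triangle_ineq2[of \<omega> z] small by linarith
  show "cmod (\<omega> - z) \<le> 3/2 * cmod \<omega>" using norm_triangle_ineq4[of \<omega> z] small by linarith
  show "cmod \<omega> > 0" using norm_lattice_pos[OF \<omega>] .
qed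

lemma norm_wp_rem_le:
  assumes z: "cmod z \<le> gap / 2" and \<omega>: "\<omega> \<in> lattice \<tau> - {0}"
  shows "norm (wp_rem z \<omega>) \<le> (40 * (1 / gap) ^ 5) / cmod \<omega> ^ 3"
proof -
  note f = norm_bounds_if_small[OF z \<omega>]
  have n1: "cmod (7 * \<omega> - 6 * z) \<le> 10 * cmod \<omega>"
    using norm_triangle_ineq4[of "7 * \<omega>" "6 * z"] f by (simp add: norm_mult)
  have "norm (wp_rem z \<omega>) = cmod (7 * \<omega> - 6 * z) / (cmod \<omega> ^ 7 * cmod (\<omega> - z) ^ 2)"
    by (simp add: wp_rem_def norm_divide norm_mult norm_power)
  also have "\<dots> \<le> (10 * cmod \<omega>) / (cmod \<omega> ^ 7 * (cmod \<omega> / 2) ^ 2)"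
    using f n1 by (intro frac_le mult_left_mono power_mono) auto
  also have "\<dots> = 40 * (1 / cmod \<omega> ^ 8)"
    using f by (simp add: field_simps eval_nat_numeral)
  also have "\<dots> \<le> 40 * ((1 / gap) ^ (8 - 3) / cmod \<omega> ^ 3)"
    by (intro mult_left_mono inv_norm_power_le[OF \<omega>]) auto
  finally show ?thesis by simp
qed

lemma norm_wp'_rem_le:
  assumes z: "cmod z \<le> gap / 2" and \<omega>: "\<omega> \<in> lattice \<tau> - {0}"
  shows "norm (wp'_rem z \<omega>) \<le> (700 * (1 / gap) ^ 5) / cmod \<omega> ^ 3"
proof -
  note f = norm_bounds_if_small[OF z \<omega>]
  define W where "W = cmod \<omega>"
  define D where "D = cmod (\<omega> - z)"
  have W: "W > 0" and D: "W / 2 \<le> D" "D \<le> 3/2 * W" using f by (simp_all add: W_def D_def)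
  have "cmod (\<omega>^2 + 5 * \<omega> * (\<omega> - z) + 15 * (\<omega> - z)^2) \<le> W^2 + 5 * W * D + 15 * D^2"
    using norm_triangle_ineq[of "\<omega>^2 + 5 * \<omega> * (\<omega> - z)" "15 * (\<omega> - z)^2"]
      norm_triangle_ineq[of "\<omega>^2" "5 * \<omega> * (\<omega> - z)"]
    by (simp add: W_def D_def norm_mult norm_power)
  also have "\<dots> \<le> W^2 + 5 * W * (3/2 * W) + 15 * (3/2 * W)^2"
    using W D by (intro add_mono mult_left_mono power_mono) auto
  also have "\<dots> \<le> 43 * W^2" by (simp add: power2_eq_square algebra_simps)
  finally have n1: "cmod (\<omega>^2 + 5 * \<omega> * (\<omega> - z) + 15 * (\<omega> - z)^2) \<le> 43 * W^2" .
  have "norm (wp'_rem z \<omega>) = 2 * cmod (\<omega>^2 + 5 * \<omega> * (\<omega> - z) + 15 * (\<omega> - z)^2) / (W ^ 7 * D ^ 3)"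
    unfolding wp'_rem_def norm_divide norm_mult norm_power W_def D_def by simp
  also have "\<dots> \<le> (2 * (43 * W^2)) / (W ^ 7 * (W / 2) ^ 3)"
    using W D n1 by (intro frac_le mult_left_mono power_mono) auto
  also have "\<dots> \<le> 700 * (1 / W ^ 8)"
    using W by (simp add: field_simps eval_nat_numeral)
  also have "\<dots> \<le> 700 * ((1 / gap) ^ (8 - 3) / cmod \<omega> ^ 3)"
    unfolding W_def by (intro mult_left_mono inv_norm_power_le[OF \<omega>]) auto
  finally show ?thesis by simp
qed

lemma wp_rem_summable:
  assumes "cmod z \<le> gap / 2"
  shows "wp_rem z summable_on (lattice \<tau> - {0})"
  by (rule lattice_sum_dominated(1)[OF norm_wp_rem_le[OF assms]])

lemma norm_Wp_rem_le:
  assumes "cmod z \<le> gap / 2"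
  shows "norm (Wp_rem z) \<le> 40 * (1 / gap) ^ 5 * inv_cube_sum"
  unfolding Wp_rem_def by (rule lattice_sum_dominated(2)[OF norm_wp_rem_le[OF assms]])

lemma wp'_rem_summable:
  assumes "cmod z \<le> gap / 2"
  shows "wp'_rem z summable_on (lattice \<tau> - {0})"
  by (rule lattice_sum_dominated(1)[OF norm_wp'_rem_le[OF assms]])

lemma norm_Wp'_rem_le:
  assumes "cmod z \<le> gap / 2"
  shows "norm (Wp'_rem z) \<le> 700 * (1 / gap) ^ 5 * inv_cube_sum"
  unfolding Wp'_rem_def by (rule lattice_sum_dominated(2)[OF norm_wp'_rem_le[OF assms]])

text \<open>The odd powers of \<open>z\<close> drop out because the lattice is symmetric.\<close>

lemma wp_reg_expansion:
  assumes z: "cmod z \<le> gap / 2"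
  shows "wp_reg z = 3 * G4 * z^2 + 5 * G6 * z^4 + z^6 * Wp_rem z"
proof -
  have zL: "z \<notin> lattice \<tau> - {0}" using z norm_lattice_ge_gap gap_pos by force
  have "wp_reg z = infsum (\<lambda>\<omega>. 3 * z^2 * (1 / \<omega>^4)) (lattice \<tau> - {0})
      + infsum (\<lambda>\<omega>. 5 * z^4 * (1 / \<omega>^6)) (lattice \<tau> - {0})
      + infsum (\<lambda>\<omega>. z^6 * wp_rem z \<omega>) (lattice \<tau> - {0})"
    unfolding wp_reg_def
  proof (rule infsum_split_null)
    show "wp_term z summable_on (lattice \<tau> - {0})" by (rule wp_term_summable[OF zL])
    show "(\<lambda>\<omega>. 3 * z^2 * (1 / \<omega>^4)) summable_on (lattice \<tau> - {0})"
      "(\<lambda>\<omega>. 5 * z^4 * (1 / \<omega>^6)) summable_on (lattice \<tau> - {0})"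
      "(\<lambda>\<omega>. z^6 * wp_rem z \<omega>) summable_on (lattice \<tau> - {0})"
      by (intro summable_on_cmult_right inv_power_summable wp_rem_summable[OF z]; simp)+
    show "infsum (\<lambda>\<omega>. 2 * z * (1 / \<omega>^3) + 4 * z^3 * (1 / \<omega>^5) + 6 * z^5 * (1 / \<omega>^7))
        (lattice \<tau> - {0}) = 0"
      by (rule infsum_lattice_odd) (simp add: power_minus_odd algebra_simps)
  next
    fix \<omega> assume "\<omega> \<in> lattice \<tau> - {0}"
    then show "wp_term z \<omega> = (2 * z * (1 / \<omega>^3) + 4 * z^3 * (1 / \<omega>^5) + 6 * z^5 * (1 / \<omega>^7))
      + (3 * z^2 * (1 / \<omega>^4) + (5 * z^4 * (1 / \<omega>^6) + z^6 * wp_rem z \<omega>))"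
      using zL by (intro wp_term_expansion) auto
  qed
  also have "\<dots> = 3 * G4 * z^2 + 5 * G6 * z^4 + z^6 * Wp_rem z"
    unfolding G4_def G6_def Wp_rem_def
    by (subst (1 2 3) infsum_cmult_right) (auto intro: inv_power_summable wp_rem_summable[OF z])
  finally show ?thesis .
qed

lemma wp_reg'_expansion:
  assumes z: "cmod z \<le> gap / 2"
  shows "wp_reg' z = 6 * G4 * z + 20 * G6 * z^3 + z^5 * Wp'_rem z"
proof -
  have zL: "z \<notin> lattice \<tau> - {0}" using z norm_lattice_ge_gap gap_pos by force
  have "wp_reg' z = infsum (\<lambda>\<omega>. 6 * z * (1 / \<omega>^4)) (lattice \<tau> - {0})
      + infsum (\<lambda>\<omega>. 20 * z^3 * (1 / \<omega>^6)) (lattice \<tau> - {0})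
      + infsum (\<lambda>\<omega>. z^5 * wp'_rem z \<omega>) (lattice \<tau> - {0})"
    unfolding wp_reg'_def
  proof (rule infsum_split_null)
    show "(\<lambda>\<omega>. -2 / (z - \<omega>)^3) summable_on (lattice \<tau> - {0})" by (rule wp_reg'_term_summable[OF zL])
    show "(\<lambda>\<omega>. 6 * z * (1 / \<omega>^4)) summable_on (lattice \<tau> - {0})"
      "(\<lambda>\<omega>. 20 * z^3 * (1 / \<omega>^6)) summable_on (lattice \<tau> - {0})"
      "(\<lambda>\<omega>. z^5 * wp'_rem z \<omega>) summable_on (lattice \<tau> - {0})"
      by (intro summable_on_cmult_right inv_power_summable wp'_rem_summable[OF z]; simp)+
    show "infsum (\<lambda>\<omega>. 2 * (1 / \<omega>^3) + 12 * z^2 * (1 / \<omega>^5) + 30 * z^4 * (1 / \<omega>^7))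
        (lattice \<tau> - {0}) = 0"
      by (rule infsum_lattice_odd) (simp add: power_minus_odd algebra_simps)
  next
    fix \<omega> assume "\<omega> \<in> lattice \<tau> - {0}"
    then show "-2 / (z - \<omega>)^3 = (2 * (1 / \<omega>^3) + 12 * z^2 * (1 / \<omega>^5) + 30 * z^4 * (1 / \<omega>^7))
      + (6 * z * (1 / \<omega>^4) + (20 * z^3 * (1 / \<omega>^6) + z^5 * wp'_rem z \<omega>))"
      using zL by (intro wp'_term_expansion) auto
  qed
  also have "\<dots> = 6 * G4 * z + 20 * G6 * z^3 + z^5 * Wp'_rem z"
    unfolding G4_def G6_def Wp'_rem_def
    by (subst (1 2 3) infsum_cmult_right) (auto intro: inv_power_summable wp'_rem_summable[OF z])
  finally show ?thesis .
qed

lemma wp_laurent: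
  "z \<noteq> 0 \<Longrightarrow> cmod z \<le> gap / 2 \<Longrightarrow> wp \<tau> z = 1 / z^2 + z^2 * (3 * G4 + 5 * G6 * z^2 + z^4 * Wp_rem z)"
  using wp_reg_expansion[of z] by (simp add: wp_eq_wp_reg algebra_simps eval_nat_numeral)

lemma wp'_laurent:
  "z \<noteq> 0 \<Longrightarrow> cmod z \<le> gap / 2 \<Longrightarrow>
    wp' z = -2 / z^3 + z * (2 * (3 * G4) + 4 * (5 * G6) * z^2 + z^4 * Wp'_rem z)"
  using wp_reg'_expansion[of z] by (simp add: wp'_def algebra_simps eval_nat_numeral)

lemma Bfun_Wp_rem: "Bfun Wp_rem (at 0)"
  by (rule BfunI, rule eventually_mono[OF eventually_small_at_0]) (use norm_Wp_rem_le in blast)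

lemma Bfun_Wp'_rem: "Bfun Wp'_rem (at 0)"
  by (rule BfunI, rule eventually_mono[OF eventually_small_at_0]) (use norm_Wp'_rem_le in blast)

lemma wp_double_pole: "((\<lambda>z. z^2 * wp \<tau> z) \<longlongrightarrow> 1) (at 0)"
proof -
  define \<Psi> where "\<Psi> = (\<lambda>z. z^2 * (3 * G4 + 5 * G6 * z^2 + z^4 * Wp_rem z))"
  have "Bfun \<Psi> (at 0)"
    unfolding \<Psi>_def by (intro Bfun_add Bfun_mult Bfun_power Bfun_const Bfun_Wp_rem Bfun_ident_at)
  then have "((\<lambda>z. 1 + z^2 * \<Psi> z) \<longlongrightarrow> 1 + 0) (at 0)"
    by (intro tendsto_add tendsto_const tendsto_square_mult_Bfun_at_0)
  moreover have "eventually (\<lambda>z. 1 + z^2 * \<Psi> z = z^2 * wp \<tau> z) (at 0)"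
    by (rule eventually_mono[OF eventually_small_at_0]) (simp add: wp_laurent \<Psi>_def field_simps)
  ultimately show ?thesis by (simp add: Lim_transform_eventually)
qed

lemma wp'_triple_pole: "((\<lambda>z. z^3 * wp' z) \<longlongrightarrow> -2) (at 0)"
proof -
  define \<Psi> where "\<Psi> = (\<lambda>z. z^2 * (2 * (3 * G4) + 4 * (5 * G6) * z^2 + z^4 * Wp'_rem z))"
  have "Bfun \<Psi> (at 0)"
    unfolding \<Psi>_def by (intro Bfun_add Bfun_mult Bfun_power Bfun_const Bfun_Wp'_rem Bfun_ident_at)
  then have "((\<lambda>z. -2 + z^2 * \<Psi> z) \<longlongrightarrow> -2 + 0) (at 0)"
    by (intro tendsto_add tendsto_const tendsto_square_mult_Bfun_at_0)
  moreover have "eventually (\<lambda>z. -2 + z^2 * \<Psi> z = z^3 * wp' z) (at 0)"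
    by (rule eventually_mono[OF eventually_small_at_0])
      (simp add: wp'_laurent \<Psi>_def field_simps eval_nat_numeral)
  ultimately show ?thesis by (simp add: Lim_transform_eventually)
qed

end

section \<open>The differential equations\<close>

lemma ode_defect_laurent:
  fixes z a b R R' :: complex
  assumes "z \<noteq> 0"
  shows "(-2/z^3 + z*(2*a + 4*b*z^2 + z^4*R'))^2 - 4*(1/z^2 + z^2*(a + b*z^2 + z^4*R))^3
      + 20*a*(1/z^2 + z^2*(a + b*z^2 + z^4*R)) + 28*b
    = z^2 * (-4*R' - 12*R + (2*a + 4*b*z^2 + z^4*R')^2 - 12*(a + b*z^2 + z^4*R)^2
        - 4*z^4*(a + b*z^2 + z^4*R)^3 + 20*a*(a + b*z^2 + z^4*R))"
  using assms
  apply (simp add: divide_simps)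
  apply algebra
  done

context period_lattice
begin

definition ode_defect :: "complex \<Rightarrow> complex" where
  "ode_defect z = (wp' z)^2 - 4 * (wp \<tau> z)^3 + g2 \<tau> * wp \<tau> z + g3 \<tau>"

text \<open>The poles of \<open>ode_defect\<close> are removable; this is its extension by \<open>0\<close> to the lattice.\<close>

definition ode_defect_ext :: "complex \<Rightarrow> complex" where
  "ode_defect_ext z = (if z \<in> lattice \<tau> then 0 else ode_defect z)"

lemma ode_defect_tendsto_0: "(ode_defect \<longlongrightarrow> 0) (at 0)"
proof -
  define a where "a = 3 * G4"
  define b where "b = 5 * G6"
  define \<Phi> where "\<Phi> = (\<lambda>z. -4 * Wp'_rem z - 12 * Wp_rem z + (2*a + 4*b*z^2 + z^4 * Wp'_rem z)^2
    - 12 * (a + b*z^2 + z^4 * Wp_rem z)^2 - 4 * z^4 * (a + b*z^2 + z^4 * Wp_rem z)^3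
    + 20 * a * (a + b*z^2 + z^4 * Wp_rem z))"
  have g: "g2 \<tau> = 20 * a" "g3 \<tau> = 28 * b" by (simp_all add: g2_eq g3_eq a_def b_def)
  have "eventually (\<lambda>z. z^2 * \<Phi> z = ode_defect z) (at 0)"
    using eventually_small_at_0
  proof eventually_elim
    case (elim z)
    then show ?case
      using ode_defect_laurent[of z a b "Wp'_rem z" "Wp_rem z"]
      by (simp add: ode_defect_def wp_laurent wp'_laurent \<Phi>_def g flip: a_def b_def)
  qed
  moreover have "Bfun \<Phi> (at 0)"
    unfolding \<Phi>_def
    by (intro Bfun_add Bfun_diff Bfun_mult Bfun_power Bfun_const Bfun_Wp_rem Bfun_Wp'_rem Bfun_ident_at)
  ultimately show ?thesis
    using tendsto_square_mult_Bfun_at_0 Lim_transform_eventually by blast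
qed

lemma ode_defect_holomorphic: "ode_defect holomorphic_on (- lattice \<tau>)"
  unfolding ode_defect_def[abs_def] by (intro holomorphic_intros wp'_holomorphic wp_holomorphic)

lemma ode_defect_ext_periodic:
  assumes "w \<in> lattice \<tau>"
  shows "ode_defect_ext (z + w) = ode_defect_ext z"
proof (rule lattice_periodic[OF _ _ assms])
  fix z
  show "ode_defect_ext (z + 1) = ode_defect_ext z" "ode_defect_ext (z + \<tau>) = ode_defect_ext z"
    using lattice_add_iff[of 1 z] lattice_add_iff[of \<tau> z]
    by (auto simp: ode_defect_ext_def ode_defect_def wp_plus_1 wp_plus_tau wp'_periodic)
qed

lemma ode_defect_ext_continuous_at_lattice:
  assumes w: "w \<in> lattice \<tau>"
  shows "(ode_defect_ext \<longlongrightarrow> ode_defect_ext w) (at w)"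
proof -
  have "eventually (\<lambda>z. ode_defect z = ode_defect_ext z) (at 0)"
    by (rule eventually_mono[OF eventually_small_at_0])
      (use notin_lattice_if_small gap_pos in \<open>auto simp: ode_defect_ext_def\<close>)
  then have "(ode_defect_ext \<longlongrightarrow> 0) (at 0)"
    by (rule Lim_transform_eventually[OF ode_defect_tendsto_0])
  then have "((\<lambda>h. ode_defect_ext (w + h)) \<longlongrightarrow> 0) (at 0)"
    by (simp add: ode_defect_ext_periodic[OF w] add.commute)
  then have "(ode_defect_ext \<longlongrightarrow> 0) (at w)"
    by (cases "w = 0") (simp_all add: LIM_offset_zero_iff)
  then show ?thesis using w by (simp add: ode_defect_ext_def)
qed

lemma ode_defect_ext_entire: "ode_defect_ext holomorphic_on UNIV"
proof -
  have holo: "ode_defect_ext holomorphic_on (- lattice \<tau>)"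
    by (rule holomorphic_transform[OF ode_defect_holomorphic]) (simp add: ode_defect_ext_def)
  have "ode_defect_ext field_differentiable (at z)" for z
  proof (cases "z \<in> lattice \<tau>")
    case False
    then show ?thesis using holo open_lattice_compl holomorphic_on_imp_differentiable_at by blast
  next
    case True
    have "ball z gap - {z} \<subseteq> - lattice \<tau>"
    proof
      fix x assume x: "x \<in> ball z gap - {z}"
      show "x \<in> - lattice \<tau>"
      proof
        assume "x \<in> lattice \<tau>"
        then have "dist x z \<ge> gap" using dist_lattice_ge_gap True x by blast
        with x show False by (simp add: dist_commute)
      qed
    qed
    then have holo_punctured: "ode_defect_ext holomorphic_on (ball z gap - {z})"
      by (rule holomorphic_on_subset[OF holo])
    have "ode_defect_ext holomorphic_on ball z gap"
    proof (rule no_isolated_singularity'[where K="{z}"])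
      show "(ode_defect_ext \<longlongrightarrow> ode_defect_ext x) (at x within ball z gap)" if "x \<in> {z}" for x
        using ode_defect_ext_continuous_at_lattice[OF True] that tendsto_within_subset by force
    qed (use holo_punctured in auto)
    then show ?thesis using gap_pos holomorphic_on_imp_differentiable_at[of _ "ball z gap" z] by auto
  qed
  then show ?thesis by (simp add: holomorphic_on_def field_differentiable_at_within)
qed

lemma ode_defect_ext_eq_0: "ode_defect_ext z = 0"
proof -
  define P where "P = cball (0::complex) (1 + Im \<tau>)"
  have "range ode_defect_ext \<subseteq> ode_defect_ext ` P"
  proof
    fix y assume "y \<in> range ode_defect_ext"
    then obtain z where y: "y = ode_defect_ext z" by auto
    obtain w p where "w \<in> lattice \<tau>" "z = p + w" "cmod p \<le> 1 + Im \<tau>"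
      by (rule lattice_translate_bounded)
    then show "y \<in> ode_defect_ext ` P" using y ode_defect_ext_periodic by (auto simp: P_def)
  qed
  moreover have "compact (ode_defect_ext ` P)"
    using ode_defect_ext_entire unfolding P_def
    by (intro compact_continuous_image holomorphic_on_imp_continuous_on) (auto intro: holomorphic_on_subset)
  ultimately have "bounded (range ode_defect_ext)" using compact_imp_bounded bounded_subset by blast
  then have "ode_defect_ext constant_on UNIV" using Liouville_theorem[OF ode_defect_ext_entire] by blast
  then have "ode_defect_ext z = ode_defect_ext 0" by (auto simp: constant_on_def)
  then show ?thesis by (simp add: ode_defect_ext_def)
qed

theorem wp_ode:
  assumes "z \<notin> lattice \<tau>"
  shows "(wp' z)^2 = 4 * (wp \<tau> z)^3 - g2 \<tau> * wp \<tau> z - g3 \<tau>"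
  using ode_defect_ext_eq_0[of z] assms by (simp add: ode_defect_ext_def ode_defect_def algebra_simps)

lemma wp'_eq_0_if_half_period:
  assumes "u \<notin> lattice \<tau>" "2 * u \<in> lattice \<tau>"
  shows "wp' u = 0"
proof -
  have "- u \<notin> lattice \<tau>" using assms lattice_uminus_iff by auto
  then have "wp' (- u + 2 * u) = wp' (- u)" by (rule wp'_periodic[OF _ assms(2)])
  then show ?thesis using wp'_odd[OF assms(1)] by simp
qed

definition wp'' :: "complex \<Rightarrow> complex" where
  "wp'' = deriv wp'"

lemma wp''_holomorphic: "wp'' holomorphic_on (- lattice \<tau>)"
  unfolding wp''_def by (intro holomorphic_deriv wp'_holomorphic open_lattice_compl)

lemma wp'_has_field_derivative: "z \<notin> lattice \<tau> \<Longrightarrow> (wp' has_field_derivative wp'' z) (at z)"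
  unfolding wp''_def
  using wp'_holomorphic open_lattice_compl holomorphic_on_imp_differentiable_at
    DERIV_deriv_iff_field_differentiable
  by (metis ComplI)

text \<open>Differentiating the first-order equation gives \<open>\<wp>' (\<wp>'' - 6\<wp>\<^sup>2 + g\<^sub>2/2) = 0\<close>.\<close>

lemma wp'_mult_ode2_defect_eq_0:
  assumes z: "z \<notin> lattice \<tau>"
  shows "wp' z * (wp'' z - 6 * (wp \<tau> z)^2 + g2 \<tau> / 2) = 0"
proof -
  let ?F = "\<lambda>z. (wp' z)^2 - (4 * (wp \<tau> z)^3 - g2 \<tau> * wp \<tau> z - g3 \<tau>)"
  have "(?F has_field_derivative (2 * wp' z * wp'' z - (12 * (wp \<tau> z)^2 * wp' z - g2 \<tau> * wp' z))) (at z)"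
    using wp_has_field_derivative[OF z] wp'_has_field_derivative[OF z]
    by (auto intro!: derivative_eq_intros simp: algebra_simps eval_nat_numeral)
  moreover have "(?F has_field_derivative 0) (at z)"
  proof (rule has_field_derivative_transform_within_open[OF DERIV_const open_lattice_compl])
    show "z \<in> - lattice \<tau>" using z by simp
  qed (simp add: wp_ode)
  ultimately have "2 * wp' z * wp'' z - (12 * (wp \<tau> z)^2 * wp' z - g2 \<tau> * wp' z) = 0"
    by (rule DERIV_unique)
  then have "2 * (wp' z * (wp'' z - 6 * (wp \<tau> z)^2 + g2 \<tau> / 2)) = 0"
    by (simp add: algebra_simps)
  then show ?thesis by simp
qed

lemma exists_wp'_nonzero: "\<exists>\<beta>. \<beta> \<notin> lattice \<tau> \<and> wp' \<beta> \<noteq> 0"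
proof -
  have "eventually (\<lambda>z. z^3 * wp' z \<noteq> 0) (at (0::complex))"
    by (rule tendsto_imp_eventually_ne[OF wp'_triple_pole]) simp
  then have "eventually (\<lambda>z. (z \<noteq> 0 \<and> cmod z \<le> gap / 2) \<and> z^3 * wp' z \<noteq> 0) (at (0::complex))"
    using eventually_small_at_0 by (simp add: eventually_conj_iff)
  then obtain z where z: "z \<noteq> 0" "cmod z \<le> gap / 2" "z^3 * wp' z \<noteq> 0"
    using eventually_happens[of _ "at (0::complex)"] by auto
  then have "z \<notin> lattice \<tau>" using notin_lattice_if_small[of z] gap_pos by simp
  then show ?thesis using z by auto
qed

text \<open>
  Where \<open>\<wp>' \<noteq> 0\<close> the second factor vanishes; the zeros of \<open>\<wp>' \<not>\<equiv> 0\<close> are isolated, so the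
  holomorphic second factor vanishes everywhere by continuity.\<close>

lemma wp''_eq:
  assumes z: "z \<notin> lattice \<tau>"
  shows "wp'' z = 6 * (wp \<tau> z)^2 - g2 \<tau> / 2"
proof -
  define Q where "Q = (\<lambda>z. wp'' z - 6 * (wp \<tau> z)^2 + g2 \<tau> / 2)"
  have "Q z = 0"
  proof (cases "wp' z = 0")
    case False
    then show ?thesis using wp'_mult_ode2_defect_eq_0[OF z] by (simp add: Q_def)
  next
    case True
    obtain \<beta> where \<beta>: "\<beta> \<notin> lattice \<tau>" "wp' \<beta> \<noteq> 0" using exists_wp'_nonzero by blast
    obtain r where r: "0 < r" "ball z r \<subseteq> - lattice \<tau>" "\<And>x. x \<in> ball z r - {z} \<Longrightarrow> wp' x \<noteq> 0"
      using isolated_zeros[OF wp'_holomorphic open_lattice_compl connected_lattice_compl _ True _ \<beta>(2)]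
        z \<beta>(1) by auto
    have "eventually (\<lambda>x. x \<in> ball z r - {z}) (at z)"
      unfolding eventually_at using r(1) by (intro exI[of _ r]) (auto simp: dist_commute)
    then have "eventually (\<lambda>x. Q x = 0) (at z)"
      by eventually_elim (use wp'_mult_ode2_defect_eq_0 r in \<open>force simp: Q_def\<close>)
    then have "(Q \<longlongrightarrow> 0) (at z)" by (rule tendsto_eventually)
    moreover have "Q holomorphic_on (- lattice \<tau>)"
      unfolding Q_def by (intro holomorphic_intros wp''_holomorphic wp_holomorphic)
    then have "(Q \<longlongrightarrow> Q z) (at z)"
      using open_lattice_compl z holomorphic_on_imp_continuous_on continuous_on_eq_continuous_at isCont_def
      by (metis ComplI)
    ultimately have "0 = Q z" by (rule tendsto_unique[OF at_neq_bot])
    then show ?thesis by simp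
  qed
  then show ?thesis by (simp add: Q_def algebra_simps)
qed

lemma higher_deriv2_wp:
  assumes z: "z \<notin> lattice \<tau>"
  shows "(deriv ^^ 2) (wp \<tau>) z = 6 * (wp \<tau> z)^2 - g2 \<tau> / 2"
proof -
  have "(deriv ^^ 1) (deriv (wp \<tau>)) z = (deriv ^^ 1) wp' z"
  proof (rule higher_deriv_transform_within_open[OF _ wp'_holomorphic open_lattice_compl])
    show "deriv (wp \<tau>) holomorphic_on - lattice \<tau>"
      by (intro holomorphic_deriv wp_holomorphic open_lattice_compl)
  qed (use z in \<open>simp_all add: wp'_eq_deriv\<close>)
  then have "(deriv ^^ 2) (wp \<tau>) z = wp'' z" by (simp add: wp''_def numeral_2_eq_2)
  then show ?thesis using wp''_eq[OF z] by simp
qed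

lemma higher_deriv_wp_recurrence:
  assumes z: "z \<notin> lattice \<tau>"
  shows "(deriv ^^ (k + 2)) (wp \<tau>) z =
     6 * (\<Sum>i = 0..k. of_nat (k choose i) * (deriv ^^ i) (wp \<tau>) z * (deriv ^^ (k - i)) (wp \<tau>) z)
     - (if k = 0 then g2 \<tau> / 2 else 0)"
proof -
  have S: "open (- lattice \<tau>)" "z \<in> - lattice \<tau>" using open_lattice_compl z by auto
  have "(deriv ^^ (k + 2)) (wp \<tau>) z = (deriv ^^ k) ((deriv ^^ 2) (wp \<tau>)) z"
    by (simp only: funpow_add comp_def)
  also have "\<dots> = (deriv ^^ k) (\<lambda>w. 6 * (wp \<tau> w * wp \<tau> w) - g2 \<tau> / 2) z"
  proof (rule higher_deriv_transform_within_open[OF _ _ S])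
    show "(deriv ^^ 2) (wp \<tau>) holomorphic_on - lattice \<tau>"
      by (intro holomorphic_higher_deriv wp_holomorphic S(1))
    show "(\<lambda>w. 6 * (wp \<tau> w * wp \<tau> w) - g2 \<tau> / 2) holomorphic_on - lattice \<tau>"
      by (intro holomorphic_intros wp_holomorphic)
  qed (simp add: higher_deriv2_wp power2_eq_square)
  also have "\<dots> = (deriv ^^ k) (\<lambda>w. 6 * (wp \<tau> w * wp \<tau> w)) z - (deriv ^^ k) (\<lambda>w. g2 \<tau> / 2) z"
    by (rule higher_deriv_diff[OF _ _ S]) (intro holomorphic_intros wp_holomorphic)+
  also have "(deriv ^^ k) (\<lambda>w. 6 * (wp \<tau> w * wp \<tau> w)) z = 6 * (deriv ^^ k) (\<lambda>w. wp \<tau> w * wp \<tau> w) z"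
    by (rule higher_deriv_cmult[OF _ S(2) S(1)]) (intro holomorphic_intros wp_holomorphic)
  also have "(deriv ^^ k) (\<lambda>w. wp \<tau> w * wp \<tau> w) z =
      (\<Sum>i = 0..k. of_nat (k choose i) * (deriv ^^ i) (wp \<tau>) z * (deriv ^^ (k - i)) (wp \<tau>) z)"
    by (rule higher_deriv_mult[OF wp_holomorphic wp_holomorphic S])
  finally show ?thesis by simp
qed

end

section \<open>The half-period values are distinct\<close>

context period_lattice
begin

lemma higher_deriv_wp_eq_at_half_periods:
  assumes u: "u \<notin> lattice \<tau>" "2 * u \<in> lattice \<tau>" and v: "v \<notin> lattice \<tau>" "2 * v \<in> lattice \<tau>"
    and eq: "wp \<tau> u = wp \<tau> v"
  shows "(deriv ^^ n) (wp \<tau>) u = (deriv ^^ n) (wp \<tau>) v"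
proof (induction n rule: less_induct)
  case (less n)
  consider "n = 0" | "n = 1" | k where "n = k + 2" by (metis add_2_eq_Suc' not0_implies_Suc One_nat_def)
  then show ?case
  proof cases
    case 1
    then show ?thesis using eq by simp
  next
    case 2
    then show ?thesis
      using wp'_eq_0_if_half_period[OF u] wp'_eq_0_if_half_period[OF v] wp'_eq_deriv u(1) v(1) by simp
  next
    case (3 k)
    then have "(\<Sum>i = 0..k. of_nat (k choose i) * (deriv ^^ i) (wp \<tau>) u * (deriv ^^ (k - i)) (wp \<tau>) u)
        = (\<Sum>i = 0..k. of_nat (k choose i) * (deriv ^^ i) (wp \<tau>) v * (deriv ^^ (k - i)) (wp \<tau>) v)"
      using less.IH by (intro sum.cong) auto
    then show ?thesis unfolding 3 higher_deriv_wp_recurrence[OF u(1)] higher_deriv_wp_recurrence[OF v(1)]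
      by simp
  qed
qed

lemma wp_translates_eq_if_higher_derivs_eq:
  assumes "u \<notin> lattice \<tau>" "v \<notin> lattice \<tau>"
    and derivs: "\<And>n. (deriv ^^ n) (wp \<tau>) u = (deriv ^^ n) (wp \<tau>) v"
    and w: "u + w \<notin> lattice \<tau>" "v + w \<notin> lattice \<tau>"
  shows "wp \<tau> (u + w) = wp \<tau> (v + w)"
proof -
  define U where "U = - ((\<lambda>\<omega>. \<omega> - u) ` lattice \<tau> \<union> (\<lambda>\<omega>. \<omega> - v) ` lattice \<tau>)"
  have U_iff: "x \<in> U \<longleftrightarrow> u + x \<notin> lattice \<tau> \<and> v + x \<notin> lattice \<tau>" for x
    by (auto simp: U_def image_iff algebra_simps)
  have "U = (\<lambda>x. u + x) -` (- lattice \<tau>) \<inter> (\<lambda>x. v + x) -` (- lattice \<tau>)"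
    using U_iff by auto
  then have U_open: "open U"
    by (auto intro!: open_Int continuous_open_vimage open_lattice_compl continuous_intros)
  have U_connected: "connected U"
    unfolding U_def Compl_eq_Diff_UNIV
    by (rule connected_open_diff_countable) (auto simp: countable_lattice connected_UNIV)
  have "0 \<in> U" using U_iff assms by simp
  have translate_holo: "(\<lambda>x. wp \<tau> (1 * x + c)) holomorphic_on U"
    if "\<And>x. x \<in> U \<Longrightarrow> c + x \<notin> lattice \<tau>" for c
  proof -
    have "(\<lambda>x. 1 * x + c) ` U \<subseteq> - lattice \<tau>" using that by (auto simp: add.commute)
    then have "(wp \<tau> \<circ> (\<lambda>x. 1 * x + c)) holomorphic_on U"
      by (intro holomorphic_on_compose holomorphic_intros holomorphic_on_subset[OF wp_holomorphic])
    then show ?thesis by (simp add: o_def)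
  qed
  have higher_deriv_translate: "(deriv ^^ n) (\<lambda>x. wp \<tau> (1 * x + c)) 0 = (deriv ^^ n) (wp \<tau>) c"
    if "\<And>x. x \<in> U \<Longrightarrow> c + x \<notin> lattice \<tau>" for c n
    using higher_deriv_compose_linear'[OF wp_holomorphic U_open open_lattice_compl \<open>0 \<in> U\<close>, of 1 c n]
      that by (simp add: add.commute)
  have "wp \<tau> (1 * w + u) = wp \<tau> (1 * w + v)"
  proof (rule holomorphic_fun_eq_on_connected[where f = "\<lambda>x. wp \<tau> (1 * x + u)"
        and g = "\<lambda>x. wp \<tau> (1 * x + v)", OF _ _ U_open U_connected _ \<open>0 \<in> U\<close>])
    show "(\<lambda>x. wp \<tau> (1 * x + u)) holomorphic_on U" "(\<lambda>x. wp \<tau> (1 * x + v)) holomorphic_on U"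
      using U_iff by (intro translate_holo; simp)+
    show "(deriv ^^ n) (\<lambda>x. wp \<tau> (1 * x + u)) 0 = (deriv ^^ n) (\<lambda>x. wp \<tau> (1 * x + v)) 0" for n
      using U_iff derivs by (subst (1 2) higher_deriv_translate) auto
    show "w \<in> U" using U_iff w by simp
  qed
  then show ?thesis by (simp add: add.commute)
qed

text \<open>A translate of \<open>\<wp>\<close> by a non-period is holomorphic at \<open>0\<close>, so it cannot share the pole.\<close>

lemma not_eventually_wp_translate_eq:
  assumes c: "c \<notin> lattice \<tau>"
  shows "\<not> (\<forall>\<^sub>F h in at 0. wp \<tau> h = wp \<tau> (c + h))"
proof
  assume ev: "\<forall>\<^sub>F h in at 0. wp \<tau> h = wp \<tau> (c + h)"
  have "isCont (wp \<tau>) c"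
    using wp_holomorphic open_lattice_compl c holomorphic_on_imp_continuous_on
      continuous_on_eq_continuous_at
    by (metis ComplI)
  then have "((\<lambda>h. wp \<tau> (c + h)) \<longlongrightarrow> wp \<tau> (c + 0)) (at 0)"
    by (simp add: isCont_def LIM_offset_zero)
  then have "((\<lambda>h. h^2 * wp \<tau> (c + h)) \<longlongrightarrow> 0^2 * wp \<tau> (c + 0)) (at 0)"
    by (intro tendsto_intros)
  moreover have "\<forall>\<^sub>F h in at 0. h^2 * wp \<tau> (c + h) = h^2 * wp \<tau> h"
    using ev by eventually_elim simp
  ultimately have "((\<lambda>h. h^2 * wp \<tau> h) \<longlongrightarrow> 0) (at 0)"
    by (simp add: Lim_transform_eventually)
  from tendsto_unique[OF at_neq_bot wp_double_pole this] show False by simp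
qed

lemma wp_half_periods_distinct:
  assumes u: "u \<notin> lattice \<tau>" "2 * u \<in> lattice \<tau>" and v: "v \<notin> lattice \<tau>" "2 * v \<in> lattice \<tau>"
    and vu: "v - u \<notin> lattice \<tau>"
  shows "wp \<tau> u \<noteq> wp \<tau> v"
proof
  assume "wp \<tau> u = wp \<tau> v"
  then have derivs: "(deriv ^^ n) (wp \<tau>) u = (deriv ^^ n) (wp \<tau>) v" for n
    by (rule higher_deriv_wp_eq_at_half_periods[OF u v])
  obtain e where e: "e > 0" "ball (v - u) e \<subseteq> - lattice \<tau>"
    using open_lattice_compl vu by (metis ComplI openE)
  have "\<forall>\<^sub>F h in at 0. h \<noteq> 0 \<and> cmod h < min e gap"
    unfolding eventually_at using e(1) gap_pos by (intro exI[of _ "min e gap"]) (auto simp: dist_norm)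
  then have "\<forall>\<^sub>F h in at 0. wp \<tau> h = wp \<tau> (v - u + h)"
  proof eventually_elim
    case (elim h)
    then have "v - u + h \<in> ball (v - u) e" by (simp add: dist_norm)
    then have "h \<notin> lattice \<tau>" "v - u + h \<notin> lattice \<tau>"
      using notin_lattice_if_small elim e(2) by auto
    then show ?case
      using wp_translates_eq_if_higher_derivs_eq[OF u(1) v(1) derivs, of "h - u"]
      by (simp add: algebra_simps)
  qed
  then show False using not_eventually_wp_translate_eq[OF vu] by contradiction
qed

end

section \<open>Reality of the \<open>j\<close>-invariant\<close>

definition half_period_coords :: "nat \<Rightarrow> int \<times> int" where
  "half_period_coords k = (if k = 1 then (1, 0) else if k = 2 then (0, 1) else (1, 1))"

context period_lattice
begin

definition half_period :: "nat \<Rightarrow> complex" where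
  "half_period k = lattice_pt (half_period_coords k) / 2"

lemma e_val_eq: "e_val \<tau> k = wp \<tau> (half_period k)"
  by (simp add: e_val_def half_period_def half_period_coords_def lattice_pt_simp add.commute)

lemma half_period_notin: "k \<in> {1, 2, 3} \<Longrightarrow> half_period k \<notin> lattice \<tau>"
  unfolding half_period_def using half_lattice_pt_notin
  by (auto simp: half_period_coords_def)

lemma double_half_period_in: "2 * half_period k \<in> lattice \<tau>"
  unfolding half_period_def lattice_eq_range by simp

lemma half_period_diff_notin:
  assumes "k \<in> {1, 2, 3}" "l \<in> {1, 2, 3}" "k \<noteq> l"
  shows "half_period l - half_period k \<notin> lattice \<tau>"
proof -
  obtain a b a' b' where ab: "half_period_coords k = (a, b)" "half_period_coords l = (a', b')"
    by fastforce
  then have "odd (a' - a) \<or> odd (b' - b)" using assms by (auto simp: half_period_coords_def)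
  moreover have "half_period l - half_period k = lattice_pt (a' - a, b' - b) / 2"
    by (simp add: half_period_def ab lattice_pt_simp field_simps)
  ultimately show ?thesis using half_lattice_pt_notin by metis
qed

lemma e_val_root:
  assumes "k \<in> {1, 2, 3}"
  shows "4 * (e_val \<tau> k)^3 - g2 \<tau> * e_val \<tau> k - g3 \<tau> = 0"
  using wp_ode[OF half_period_notin[OF assms]]
    wp'_eq_0_if_half_period[OF half_period_notin[OF assms] double_half_period_in]
  by (simp add: e_val_eq)

lemma e_val_distinct:
  assumes "k \<in> {1, 2, 3}" "l \<in> {1, 2, 3}" "k \<noteq> l"
  shows "e_val \<tau> k \<noteq> e_val \<tau> l"
  unfolding e_val_eq
  by (intro wp_half_periods_distinct half_period_notin double_half_period_in
      half_period_diff_notin assms)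

end

lemma cubic_coeffs_of_two_roots:
  fixes x y a b :: complex
  assumes "x \<noteq> y" "4 * x^3 - a * x - b = 0" "4 * y^3 - a * y - b = 0"
  shows "a = 4 * (x^2 + x * y + y^2)" "b = -4 * x * y * (x + y)"
proof -
  have "(x - y) * (4 * (x^2 + x * y + y^2) - a) = 0" using assms(2,3) by algebra
  then show a: "a = 4 * (x^2 + x * y + y^2)" using assms(1) by simp
  show "b = -4 * x * y * (x + y)" using assms(2) unfolding a by algebra
qed

lemma j_ratio_real_if_norm_eq:
  fixes x y :: complex
  assumes "cmod x = cmod y"
  shows "1728 * (4 * (x^2 + x*y + y^2))^3
      / ((4 * (x^2 + x*y + y^2))^3 - 27 * (-4 * x * y * (x + y))^2) \<in> \<real>"
proof (cases "x = 0")
  case True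
  then show ?thesis using assms by simp
next
  case False
  define w where "w = y / x"
  have y: "y = x * w" using False by (simp add: w_def)
  have "y \<noteq> 0" using assms False by (metis norm_eq_zero)
  then have "cmod w = 1" using assms by (simp add: w_def norm_divide)
  then have ww: "w * cnj w = 1" using complex_norm_square[of w] by simp
  define s where "s = 1 + 2 * Re w"
  define t where "t = 2 + 2 * Re w"
  have "of_real s = 1 + (w + cnj w)" "of_real t = 2 + (w + cnj w)"
    by (simp_all add: s_def t_def complex_add_cnj)
  then have "1 + w + w^2 = w * of_real s" "(1 + w)^2 = w * of_real t"
    using ww by (simp_all add: algebra_simps power2_eq_square)
  then have g2: "4 * (x^2 + x*y + y^2) = 4 * x^2 * w * of_real s"
    and g3: "(-4 * x * y * (x + y))^2 = 16 * x^6 * w^3 * of_real t"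
    using y by algebra+
  have "1728 * (4 * (x^2 + x*y + y^2))^3
      / ((4 * (x^2 + x*y + y^2))^3 - 27 * (-4 * x * y * (x + y))^2)
      = (x^6 * w^3) * (1728 * 64 * of_real s ^ 3) / ((x^6 * w^3) * (64 * of_real s ^ 3 - 432 * of_real t))"
    unfolding g2 g3 by (simp add: algebra_simps eval_nat_numeral)
  also have "\<dots> = (1728 * 64 * of_real s ^ 3) / (64 * of_real s ^ 3 - 432 * of_real t)"
    using False ww by (intro mult_divide_mult_cancel_left) auto
  also have "\<dots> = of_real ((1728 * 64 * s ^ 3) / (64 * s ^ 3 - 432 * t))" by simp
  finally show ?thesis by (simp add: Reals_of_real)
qed

theorem lemma5p2:
  fixes \<tau> :: complex and i j :: nat
  assumes "Im \<tau> > 0"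
    and "i \<in> {1,2,3}" and "j \<in> {1,2,3}" and "i \<noteq> j"
    and "cmod (e_val \<tau> i) = cmod (e_val \<tau> j)"
  shows "j_invariant \<tau> \<in> \<real>"
proof -
  interpret period_lattice \<tau> by unfold_locales (rule assms(1))
  have "g2 \<tau> = 4 * ((e_val \<tau> i)^2 + e_val \<tau> i * e_val \<tau> j + (e_val \<tau> j)^2)"
    and "g3 \<tau> = -4 * e_val \<tau> i * e_val \<tau> j * (e_val \<tau> i + e_val \<tau> j)"
    using cubic_coeffs_of_two_roots[OF e_val_distinct e_val_root e_val_root] assms(2-4) by auto
  then show ?thesis
    unfolding j_invariant_def using j_ratio_real_if_norm_eq[OF assms(5)] by simp
qed

end
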